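(* Let $A$ and $B$ be groups each admitting a regular left-order. Then $(A*B)\times\mathbb{Z}$ admits a regular left-order.
   Context: A left-order on a group $G$ is a total order invariant under left multiplication, with positive cone $P=\{g:1\prec g\}$. It is regular if $G$ is finitely generated and there exist a finite set $X$, a surjective monoid homomorphism $\pi\colon X^*\to G$ and a regular language $\mathcal{L}\subseteq X^*$ (accepted by a finite state automaton) with $\pi(\mathcal{L})=P$. $A*B$ denotes the free product. *)

theory Defs
  imports "HOL-Algebra.Algebra"
begin

definition left_order :: "('a, 'm) monoid_scheme \<Rightarrow> ('a \<Rightarrow> 'a \<Rightarrow> bool) \<Rightarrow> bool" where
  "left_order G lt \<longleftrightarrow>
     (\<forall>x\<in>carrier G. \<not> lt x x) \<and>
     (\<forall>x\<in>carrier G. \<forall>y\<in>carrier G. \<forall>z\<in>carrier G. lt x y \<longrightarrow> lt y z \<longrightarrow> lt x z) \<and>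
     (\<forall>x\<in>carrier G. \<forall>y\<in>carrier G. x \<noteq> y \<longrightarrow> lt x y \<or> lt y x) \<and>
     (\<forall>g\<in>carrier G. \<forall>h\<in>carrier G. \<forall>k\<in>carrier G. lt h k \<longrightarrow> lt (g \<otimes>\<^bsub>G\<^esub> h) (g \<otimes>\<^bsub>G\<^esub> k))"

definition positive_cone :: "('a, 'm) monoid_scheme \<Rightarrow> ('a \<Rightarrow> 'a \<Rightarrow> bool) \<Rightarrow> 'a set" where
  "positive_cone G lt = {g \<in> carrier G. lt \<one>\<^bsub>G\<^esub> g}"

definition regular_language :: "nat set \<Rightarrow> nat list set \<Rightarrow> bool" where
  "regular_language Alph L \<longleftrightarrow>
     (\<exists>(Sts::nat set) (q0::nat) (Acc::nat set) (trans_fn::nat \<Rightarrow> nat \<Rightarrow> nat).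
        finite Sts \<and> q0 \<in> Sts \<and> Acc \<subseteq> Sts \<and>
        (\<forall>q\<in>Sts. \<forall>c\<in>Alph. trans_fn q c \<in> Sts) \<and>
        L = {w \<in> lists Alph. foldl trans_fn q0 w \<in> Acc})"

definition word_monoid_hom :: "nat set \<Rightarrow> ('a, 'm) monoid_scheme \<Rightarrow> (nat list \<Rightarrow> 'a) \<Rightarrow> bool" where
  "word_monoid_hom Alph G \<pi> \<longleftrightarrow>
     \<pi> [] = \<one>\<^bsub>G\<^esub> \<and>
     (\<forall>w\<in>lists Alph. \<pi> w \<in> carrier G) \<and>
     (\<forall>u\<in>lists Alph. \<forall>v\<in>lists Alph. \<pi> (u @ v) = \<pi> u \<otimes>\<^bsub>G\<^esub> \<pi> v)"

definition finitely_generated_group :: "('a, 'm) monoid_scheme \<Rightarrow> bool" where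
  "finitely_generated_group G \<longleftrightarrow>
     (\<exists>S. finite S \<and> S \<subseteq> carrier G \<and> generate G S = carrier G)"

definition regular_left_order :: "('a, 'm) monoid_scheme \<Rightarrow> ('a \<Rightarrow> 'a \<Rightarrow> bool) \<Rightarrow> bool" where
  "regular_left_order G lt \<longleftrightarrow>
     left_order G lt \<and> finitely_generated_group G \<and>
     (\<exists>(Alph::nat set) \<pi> L. finite Alph \<and> word_monoid_hom Alph G \<pi> \<and> \<pi> ` lists Alph = carrier G \<and>
        regular_language Alph L \<and> \<pi> ` L = positive_cone G lt)"

definition admits_regular_left_order :: "('a, 'm) monoid_scheme \<Rightarrow> bool" where
  "admits_regular_left_order G \<longleftrightarrow> (\<exists>lt. regular_left_order G lt)"

text \<open>Elements of A * B are reduced words: lists of letters Inl a (a a nontrivial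
element of A) or Inr b (b nontrivial in B), with no two adjacent letters from the
same factor.\<close>
fun same_factor :: "'a + 'b \<Rightarrow> 'a + 'b \<Rightarrow> bool" where
  "same_factor (Inl _) (Inl _) = True"
| "same_factor (Inr _) (Inr _) = True"
| "same_factor _ _ = False"

fun fp_letter :: "('a, 'm) monoid_scheme \<Rightarrow> ('b, 'n) monoid_scheme \<Rightarrow> 'a + 'b \<Rightarrow> bool" where
  "fp_letter A B (Inl a) \<longleftrightarrow> a \<in> carrier A \<and> a \<noteq> \<one>\<^bsub>A\<^esub>"
| "fp_letter A B (Inr b) \<longleftrightarrow> b \<in> carrier B \<and> b \<noteq> \<one>\<^bsub>B\<^esub>"

definition fp_reduced :: "('a, 'm) monoid_scheme \<Rightarrow> ('b, 'n) monoid_scheme \<Rightarrow> ('a + 'b) list \<Rightarrow> bool" where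
  "fp_reduced A B w \<longleftrightarrow> (\<forall>x\<in>set w. fp_letter A B x) \<and>
     (\<forall>i. Suc i < length w \<longrightarrow> \<not> same_factor (w ! i) (w ! Suc i))"

fun fp_cons :: "('a, 'm) monoid_scheme \<Rightarrow> ('b, 'n) monoid_scheme \<Rightarrow> 'a + 'b \<Rightarrow> ('a + 'b) list \<Rightarrow> ('a + 'b) list" where
  "fp_cons A B (Inl a) (Inl a' # w) =
     (let c = a \<otimes>\<^bsub>A\<^esub> a' in if c = \<one>\<^bsub>A\<^esub> then w else Inl c # w)"
| "fp_cons A B (Inr b) (Inr b' # w) =
     (let c = b \<otimes>\<^bsub>B\<^esub> b' in if c = \<one>\<^bsub>B\<^esub> then w else Inr c # w)"
| "fp_cons A B x w = x # w"

definition free_product :: "('a, 'm) monoid_scheme \<Rightarrow> ('b, 'n) monoid_scheme \<Rightarrow> ('a + 'b) list monoid" where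
  "free_product A B =
     \<lparr>carrier = {w. fp_reduced A B w},
      monoid.mult = (\<lambda>u v. foldr (fp_cons A B) u v),
      one = []\<rparr>"

end

theory Submission
  imports Defs "HOL-Library.Nat_Bijection"
begin

(*
  Call a letter negative if it lies below 1 in the
  order of its factor, let weight w be the number of negative letters of w minus the number
  of A-letters of w immediately followed by a B-letter, and let threshold w = weight w for
  w ~= 1 and threshold 1 = 1.  Since weight r + weight r^-1 = 1 for r ~= 1, the cancelled
  parts of w and v in a product w v pay for the at most one A-B junction that cancellation
  destroys, and merging two letters of a factor creates no new negative letter because
  positive cones are closed under products; so threshold is subadditive, and moreover
  threshold w + threshold w^-1 = 1 for w ~= 1.  Hence {(w, n). threshold w <= n} is the
  positive cone of a left order on (A * B) x Z.

  This cone is the image of a regular language: spell every letter by a word of the regular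
  positive cone of its factor (a negative letter a by the reversed word for a^-1 in inverted
  letters, followed by the generator t of Z), insert t^-1 after every A-letter that is
  followed by a B-letter, and append an arbitrary power of t.  Regular languages are handled
  through their finitely many left quotients.
*)

section \<open>Regular languages via left quotients\<close>

definition lquot :: "'c list set \<Rightarrow> 'c list \<Rightarrow> 'c list set" where
  "lquot L u = {w. u @ w \<in> L}"

definition conc :: "'c list set \<Rightarrow> 'c list set \<Rightarrow> 'c list set" where
  "conc L M = {u @ v | u v. u \<in> L \<and> v \<in> M}"

inductive_set star :: "'c list set \<Rightarrow> 'c list set" for L where
  star_Nil: "[] \<in> star L"
| star_append: "u \<in> L \<Longrightarrow> v \<in> star L \<Longrightarrow> u @ v \<in> star L"

lemma lquot_Nil [simp]: "lquot L [] = L"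
  by (simp add: lquot_def)

lemma lquot_lquot: "lquot (lquot L u) v = lquot L (u @ v)"
  by (simp add: lquot_def)

lemma foldl_lquot: "foldl (\<lambda>K c. lquot K [c]) K u = lquot K u"
  by (induction u arbitrary: K) (simp_all add: lquot_lquot)

lemma regular_language_of_dfa:
  fixes \<delta> :: "'s \<Rightarrow> nat \<Rightarrow> 's"
  assumes fin: "finite Q" and q0: "q0 \<in> Q" and F: "F \<subseteq> Q"
    and closed: "\<forall>q\<in>Q. \<forall>c\<in>Alph. \<delta> q c \<in> Q"
  shows "regular_language Alph {w \<in> lists Alph. foldl \<delta> q0 w \<in> F}"
proof -
  obtain f :: "'s \<Rightarrow> nat" where inj: "inj_on f Q"
    using fin finite_imp_inj_to_nat_seg by blast
  define g where "g = inv_into Q f"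
  define \<delta>' where "\<delta>' = (\<lambda>m c. f (\<delta> (g m) c))"
  have run: "foldl \<delta>' (f q) w = f (foldl \<delta> q w) \<and> foldl \<delta> q w \<in> Q"
    if "w \<in> lists Alph" "q \<in> Q" for w q
    using that by (induction w arbitrary: q) (auto simp: \<delta>'_def g_def inj closed)
  have accept: "foldl \<delta>' (f q0) w \<in> f ` F \<longleftrightarrow> foldl \<delta> q0 w \<in> F" if "w \<in> lists Alph" for w
    using run[OF that q0] inj F by (auto simp: inj_on_image_mem_iff)
  show ?thesis
    unfolding regular_language_def
  proof (intro exI conjI)
    show "\<forall>q\<in>f ` Q. \<forall>c\<in>Alph. \<delta>' q c \<in> f ` Q"
      using closed by (auto simp: \<delta>'_def g_def inj)
    show "{w \<in> lists Alph. foldl \<delta> q0 w \<in> F} = {w \<in> lists Alph. foldl \<delta>' (f q0) w \<in> f ` F}"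
      using accept by blast
  qed (use fin q0 F in auto)
qed

lemma regular_language_iff_finite_lquot:
  "regular_language Alph L \<longleftrightarrow> L \<subseteq> lists Alph \<and> finite (lquot L ` lists Alph)"
proof
  assume "regular_language Alph L"
  then obtain Q q0 F \<delta> where fin: "finite (Q :: nat set)" and q0: "q0 \<in> Q"
    and closed: "\<forall>q\<in>Q. \<forall>c\<in>Alph. \<delta> q c \<in> Q" and L: "L = {w \<in> lists Alph. foldl \<delta> q0 w \<in> F}"
    unfolding regular_language_def by blast
  have run: "foldl \<delta> q u \<in> Q" if "u \<in> lists Alph" "q \<in> Q" for u q
    using that by (induction u arbitrary: q) (use closed in auto)
  have "lquot L ` lists Alph \<subseteq> (\<lambda>q. {w \<in> lists Alph. foldl \<delta> q w \<in> F}) ` Q"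
  proof
    fix K assume "K \<in> lquot L ` lists Alph"
    then obtain u where u: "u \<in> lists Alph" "K = lquot L u" by blast
    then have "K = {w \<in> lists Alph. foldl \<delta> (foldl \<delta> q0 u) w \<in> F}"
      by (auto simp: lquot_def L)
    with run[OF u(1) q0] show "K \<in> (\<lambda>q. {w \<in> lists Alph. foldl \<delta> q w \<in> F}) ` Q" by blast
  qed
  then show "L \<subseteq> lists Alph \<and> finite (lquot L ` lists Alph)"
    using finite_subset[OF _ finite_imageI[OF fin]] L by auto
next
  assume L: "L \<subseteq> lists Alph \<and> finite (lquot L ` lists Alph)"
  let ?Q = "lquot L ` lists Alph"
  have "regular_language Alph {w \<in> lists Alph. foldl (\<lambda>K c. lquot K [c]) L w \<in> {K \<in> ?Q. [] \<in> K}}"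
  proof (rule regular_language_of_dfa)
    show "L \<in> ?Q" using lquot_Nil by blast
    show "\<forall>K\<in>?Q. \<forall>c\<in>Alph. lquot K [c] \<in> ?Q"
    proof (intro ballI)
      fix K c assume "K \<in> ?Q" "c \<in> Alph"
      then obtain u where u: "u \<in> lists Alph" "K = lquot L u" by blast
      then have "lquot K [c] = lquot L (u @ [c])" by (simp add: lquot_lquot)
      with u(1) \<open>c \<in> Alph\<close> show "lquot K [c] \<in> ?Q" by auto
    qed
  qed (use L in auto)
  moreover have "{w \<in> lists Alph. foldl (\<lambda>K c. lquot K [c]) L w \<in> {K \<in> ?Q. [] \<in> K}} = L"
  proof -
    have "foldl (\<lambda>K c. lquot K [c]) L w \<in> {K \<in> ?Q. [] \<in> K} \<longleftrightarrow> w \<in> L"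
      if "w \<in> lists Alph" for w
      using that by (simp add: foldl_lquot) (simp add: lquot_def)
    with L show ?thesis by blast
  qed
  ultimately show "regular_language Alph L" by simp
qed

lemma regular_language_lists: "regular_language Alph L \<Longrightarrow> L \<subseteq> lists Alph"
  by (simp add: regular_language_iff_finite_lquot)

lemma regular_languageI_lquot:
  assumes "L \<subseteq> lists Alph" and "finite Q" and "\<And>u. u \<in> lists Alph \<Longrightarrow> lquot L u \<in> Q"
  shows "regular_language Alph L"
proof -
  have "lquot L ` lists Alph \<subseteq> Q" using assms(3) by blast
  then show ?thesis
    unfolding regular_language_iff_finite_lquot using assms(1) finite_subset[OF _ assms(2)] by blast
qed

lemma regular_language_finite:
  assumes "finite L" and "L \<subseteq> lists Alph"
  shows "regular_language Alph L"
proof (rule regular_languageI_lquot[OF assms(2)])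
  let ?S = "\<Union>w\<in>L. (\<lambda>i. drop i w) ` {..length w}"
  show "finite (Pow ?S)" using assms(1) by simp
  show "lquot L u \<in> Pow ?S" for u
  proof (rule PowI, rule subsetI)
    fix v assume "v \<in> lquot L u"
    then have "u @ v \<in> L" and "v = drop (length u) (u @ v)" by (simp_all add: lquot_def)
    then show "v \<in> ?S" by fastforce
  qed
qed

lemma regular_language_singleton: "c \<in> Alph \<Longrightarrow> regular_language Alph {[c]}"
  by (rule regular_language_finite) auto

lemma regular_language_Un:
  assumes "regular_language Alph L" and "regular_language Alph M"
  shows "regular_language Alph (L \<union> M)"
proof (rule regular_languageI_lquot)
  let ?Q = "(\<lambda>(K, K'). K \<union> K') ` (lquot L ` lists Alph \<times> lquot M ` lists Alph)"
  show "finite ?Q" using assms by (simp add: regular_language_iff_finite_lquot)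
  show "lquot (L \<union> M) u \<in> ?Q" if "u \<in> lists Alph" for u
  proof -
    have "lquot (L \<union> M) u = lquot L u \<union> lquot M u" by (auto simp: lquot_def)
    then show ?thesis using that by (intro rev_image_eqI[of "(lquot L u, lquot M u)"]) auto
  qed
qed (use assms in \<open>auto simp: regular_language_iff_finite_lquot\<close>)

lemma regular_language_insert_Nil: "regular_language Alph L \<Longrightarrow> regular_language Alph (insert [] L)"
  using regular_language_Un[of Alph "{[]}" L] by (simp add: regular_language_finite)

lemma concI: "u \<in> L \<Longrightarrow> v \<in> M \<Longrightarrow> u @ v \<in> conc L M"
  by (auto simp: conc_def)

lemma concE: "w \<in> conc L M \<Longrightarrow> (\<And>u v. w = u @ v \<Longrightarrow> u \<in> L \<Longrightarrow> v \<in> M \<Longrightarrow> P) \<Longrightarrow> P"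
  by (auto simp: conc_def)

lemma lquot_conc:
  "lquot (conc L M) u = conc (lquot L u) M \<union> \<Union> {lquot M v | v. \<exists>x\<in>L. u = x @ v}"
proof (intro equalityI subsetI)
  fix w assume "w \<in> lquot (conc L M) u"
  then obtain x y where xy: "u @ w = x @ y" "x \<in> L" "y \<in> M" by (auto simp: lquot_def conc_def)
  then obtain v where "u = x @ v \<and> v @ w = y \<or> u @ v = x \<and> w = v @ y"
    using append_eq_append_conv2[of u w x y] by blast
  with xy show "w \<in> conc (lquot L u) M \<union> \<Union> {lquot M v | v. \<exists>x\<in>L. u = x @ v}"
    by (auto simp: lquot_def conc_def) blast
next
  fix w assume "w \<in> conc (lquot L u) M \<union> \<Union> {lquot M v | v. \<exists>x\<in>L. u = x @ v}"
  then show "w \<in> lquot (conc L M) u"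
    by (auto simp: lquot_def conc_def) (metis append.assoc)+
qed

lemma regular_language_conc:
  assumes "regular_language Alph L" and "regular_language Alph M"
  shows "regular_language Alph (conc L M)"
proof (rule regular_languageI_lquot)
  let ?F = "\<lambda>(K, S). conc K M \<union> \<Union> S"
  let ?Q = "?F ` (lquot L ` lists Alph \<times> Pow (lquot M ` lists Alph))"
  show "finite ?Q" using assms by (simp add: regular_language_iff_finite_lquot)
  show "lquot (conc L M) u \<in> ?Q" if "u \<in> lists Alph" for u
  proof -
    let ?S = "{lquot M v | v. \<exists>x\<in>L. u = x @ v}"
    have "?S \<subseteq> lquot M ` lists Alph" using that by auto
    moreover have "lquot (conc L M) u = ?F (lquot L u, ?S)" by (simp add: lquot_conc)
    ultimately show ?thesis using that by (intro rev_image_eqI[of "(lquot L u, ?S)"]) auto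
  qed
  have "L \<subseteq> lists Alph" "M \<subseteq> lists Alph" using assms by (simp_all add: regular_language_lists)
  then show "conc L M \<subseteq> lists Alph" by (force simp: conc_def)
qed

lemma append_in_star: "u \<in> star L \<Longrightarrow> v \<in> star L \<Longrightarrow> u @ v \<in> star L"
  by (induction rule: star.induct) (auto intro: star.intros)

lemma star_singleton: "star {[c]} = range (\<lambda>k. replicate k c)"
proof (intro equalityI subsetI)
  fix w assume "w \<in> star {[c]}"
  then show "w \<in> range (\<lambda>k. replicate k c)"
  proof (induction rule: star.induct)
    case (star_append u v)
    then obtain k where "v = replicate k c" by blast
    then have "u @ v = replicate (Suc k) c" using star_append.hyps(1) by simp
    then show ?case by blast
  qed (metis rangeI replicate_0)
next
  fix w assume "w \<in> range (\<lambda>k. replicate k c)"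
  then obtain k where "w = replicate k c" by blast
  moreover have "replicate k c \<in> star {[c]}"
    by (induction k) (simp_all add: star.star_Nil star.star_append[of "[c]", simplified])
  ultimately show "w \<in> star {[c]}" by simp
qed

lemma star_append_split:
  assumes "u @ w \<in> star L" and "u \<noteq> []"
  shows "\<exists>x v w1 w2. u = x @ v \<and> x \<in> star L \<and> v \<noteq> [] \<and> v @ w1 \<in> L \<and> w = w1 @ w2 \<and> w2 \<in> star L"
  using assms
proof (induction "u @ w" arbitrary: u rule: star.induct)
  case (star_append y z)
  show ?case
  proof (cases "length u \<le> length y")
    case True
    then obtain w1 where "y = u @ w1" "w = w1 @ z"
      using star_append.hyps(4) by (metis append_eq_append_conv_if append_take_drop_id)
    then show ?thesis using star_append.hyps(1,2) star_append.prems star.star_Nil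
      by (metis append_Nil)
  next
    case False
    then obtain u' where u': "u = y @ u'" "u' \<noteq> []" "z = u' @ w"
      using star_append.hyps(4) by (metis append_eq_append_conv_if append_take_drop_id nle_le append_Nil2)
    then obtain x v w1 w2 where "u' = x @ v" "x \<in> star L" "v \<noteq> []" "v @ w1 \<in> L" "w = w1 @ w2" "w2 \<in> star L"
      using star_append.hyps(3) by blast
    then show ?thesis using u' star_append.hyps(1) star.star_append[of y L x] by (metis append.assoc)
  qed
qed simp

lemma lquot_star:
  assumes "u \<noteq> []"
  shows "lquot (star L) u = \<Union> {conc (lquot L v) (star L) | v. \<exists>x\<in>star L. u = x @ v \<and> v \<noteq> []}"
proof (intro equalityI subsetI)
  fix w assume "w \<in> lquot (star L) u"
  then have "u @ w \<in> star L" by (simp add: lquot_def)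
  then obtain x v w1 w2 where "u = x @ v" "x \<in> star L" "v \<noteq> []" "v @ w1 \<in> L" "w = w1 @ w2" "w2 \<in> star L"
    using star_append_split[OF _ assms] by blast
  then show "w \<in> \<Union> {conc (lquot L v) (star L) | v. \<exists>x\<in>star L. u = x @ v \<and> v \<noteq> []}"
    by (auto simp: conc_def lquot_def)
next
  fix w assume "w \<in> \<Union> {conc (lquot L v) (star L) | v. \<exists>x\<in>star L. u = x @ v \<and> v \<noteq> []}"
  then obtain x v w1 w2 where "u = x @ v" "x \<in> star L" "w = w1 @ w2" "v @ w1 \<in> L" "w2 \<in> star L"
    by (auto simp: conc_def lquot_def)
  then show "w \<in> lquot (star L) u"
    using append_in_star star.star_append[of "v @ w1" L w2] by (fastforce simp: lquot_def)
qed

lemma regular_language_star: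
  assumes "regular_language Alph L"
  shows "regular_language Alph (star L)"
proof (rule regular_languageI_lquot)
  let ?Q = "insert (star L) ((\<lambda>S. \<Union>K\<in>S. conc K (star L)) ` Pow (lquot L ` lists Alph))"
  show "finite ?Q" using assms by (simp add: regular_language_iff_finite_lquot)
  show "lquot (star L) u \<in> ?Q" if "u \<in> lists Alph" for u
  proof (cases "u = []")
    case False
    let ?S = "{lquot L v | v. \<exists>x\<in>star L. u = x @ v \<and> v \<noteq> []}"
    have "?S \<subseteq> lquot L ` lists Alph" using that by auto
    moreover have "lquot (star L) u = (\<Union>K\<in>?S. conc K (star L))"
      using lquot_star[OF False] by auto
    ultimately show ?thesis by (intro insertI2 rev_image_eqI[of ?S]) auto
  qed simp
  show "star L \<subseteq> lists Alph"
  proof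
    fix w assume "w \<in> star L"
    then show "w \<in> lists Alph"
      by (induction rule: star.induct) (use assms regular_language_lists in auto)
  qed
qed

lemma regular_language_map:
  assumes reg: "regular_language Alph L" and inj: "inj_on h Alph" and img: "h ` Alph \<subseteq> Alph'"
  shows "regular_language Alph' (map h ` L)"
proof (rule regular_languageI_lquot)
  have L: "L \<subseteq> lists Alph" using reg by (rule regular_language_lists)
  let ?Q = "insert {} ((`) (map h) ` lquot L ` lists Alph)"
  show "finite ?Q" using reg by (simp add: regular_language_iff_finite_lquot)
  have "map h w \<in> lists Alph'" if "w \<in> lists Alph" for w
    using that img by (induction w) auto
  then show "map h ` L \<subseteq> lists Alph'" using L by auto
  show "lquot (map h ` L) u \<in> ?Q" for u
  proof (cases "lquot (map h ` L) u = {}")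
    case False
    then obtain w x where "x \<in> L" "u @ w = map h x" by (auto simp: lquot_def)
    then obtain u0 vs where "x = u0 @ vs" "u = map h u0"
      by (auto simp: append_eq_map_conv)
    with \<open>x \<in> L\<close> L have u0: "u0 \<in> lists Alph" "u = map h u0" by auto
    have "lquot (map h ` L) u = map h ` lquot L u0"
    proof (intro equalityI subsetI)
      fix y assume "y \<in> lquot (map h ` L) u"
      then obtain z where z: "z \<in> L" "u @ y = map h z" by (auto simp: lquot_def)
      then obtain z1 z2 where zz: "z = z1 @ z2" "u = map h z1" "y = map h z2"
        by (auto simp: append_eq_map_conv)
      have "z1 \<in> lists Alph" using z(1) L zz(1) by auto
      then have "z1 = u0" using inj_onD[OF inj_on_map_lists[OF inj]] zz(2) u0 by metis
      then show "y \<in> map h ` lquot L u0" using zz z by (auto simp: lquot_def)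
    qed (use u0 in \<open>auto simp: lquot_def simp flip: map_append\<close>)
    then show ?thesis using u0 by (intro insertI2 rev_image_eqI[of "lquot L u0"]) auto
  qed simp
qed

lemma rev_image_iff: "w \<in> rev ` L \<longleftrightarrow> rev w \<in> L"
  by (metis rev_swap image_iff)

lemma regular_language_rev:
  assumes "regular_language Alph L"
  shows "regular_language Alph (rev ` L)"
proof -
  obtain Q q0 F \<delta> where fin: "finite (Q :: nat set)" and q0: "q0 \<in> Q"
    and closed: "\<forall>q\<in>Q. \<forall>c\<in>Alph. \<delta> q c \<in> Q" and L: "L = {w \<in> lists Alph. foldl \<delta> q0 w \<in> F}"
    using assms unfolding regular_language_def by blast
  have run: "foldl \<delta> q u \<in> Q" if "u \<in> lists Alph" "q \<in> Q" for u q
    using that by (induction u arbitrary: q) (use closed in auto)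
  let ?lang = "\<lambda>S. rev ` {x \<in> lists Alph. foldl \<delta> q0 x \<in> S}"
  show ?thesis
  proof (rule regular_languageI_lquot)
    show "rev ` L \<subseteq> lists Alph" using L by auto
    show "finite (?lang ` Pow Q)" using fin by simp
    show "lquot (rev ` L) u \<in> ?lang ` Pow Q" if "u \<in> lists Alph" for u
    proof -
      \<comment> \<open>rev (u @ w) = rev w @ rev u: reading rev w must lead to a state accepting rev u\<close>
      let ?S = "{q \<in> Q. foldl \<delta> q (rev u) \<in> F}"
      have "w \<in> lquot (rev ` L) u \<longleftrightarrow> rev w \<in> lists Alph \<and> foldl \<delta> q0 (rev w) \<in> ?S" for w
        using that run q0 by (auto simp: lquot_def rev_image_iff L)
      then have "lquot (rev ` L) u = ?lang ?S" by (auto simp: rev_image_iff)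
      then show ?thesis by (intro rev_image_eqI[of ?S]) auto
    qed
  qed
qed

section \<open>Left orders from positive cones\<close>

lemma left_order_pos_mult:
  assumes "group G" and lo: "left_order G lt" and g: "g \<in> carrier G" and h: "h \<in> carrier G"
    and "lt \<one>\<^bsub>G\<^esub> g" and "lt \<one>\<^bsub>G\<^esub> h"
  shows "lt \<one>\<^bsub>G\<^esub> (g \<otimes>\<^bsub>G\<^esub> h)"
proof -
  interpret G: group G by fact
  have "lt (g \<otimes>\<^bsub>G\<^esub> \<one>\<^bsub>G\<^esub>) (g \<otimes>\<^bsub>G\<^esub> h)"
    using lo g h \<open>lt \<one>\<^bsub>G\<^esub> h\<close> unfolding left_order_def by blast
  with \<open>lt \<one>\<^bsub>G\<^esub> g\<close> show ?thesis
    using lo g h unfolding left_order_def by (metis G.m_closed G.one_closed G.r_one)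
qed

lemma left_order_pos_inv_iff:
  assumes G: "group G" and lo: "left_order G lt" and g: "g \<in> carrier G" and "g \<noteq> \<one>\<^bsub>G\<^esub>"
  shows "lt \<one>\<^bsub>G\<^esub> (inv\<^bsub>G\<^esub> g) \<longleftrightarrow> \<not> lt \<one>\<^bsub>G\<^esub> g"
proof -
  interpret G: group G by fact
  have "lt \<one>\<^bsub>G\<^esub> g \<or> lt g \<one>\<^bsub>G\<^esub>" and irrefl: "\<not> lt \<one>\<^bsub>G\<^esub> \<one>\<^bsub>G\<^esub>"
    using lo g \<open>g \<noteq> \<one>\<^bsub>G\<^esub>\<close> unfolding left_order_def by auto
  moreover have "lt g \<one>\<^bsub>G\<^esub> \<longleftrightarrow> lt \<one>\<^bsub>G\<^esub> (inv\<^bsub>G\<^esub> g)"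
  proof
    assume "lt g \<one>\<^bsub>G\<^esub>"
    then have "lt (inv\<^bsub>G\<^esub> g \<otimes>\<^bsub>G\<^esub> g) (inv\<^bsub>G\<^esub> g \<otimes>\<^bsub>G\<^esub> \<one>\<^bsub>G\<^esub>)"
      using lo g unfolding left_order_def by blast
    then show "lt \<one>\<^bsub>G\<^esub> (inv\<^bsub>G\<^esub> g)" using g by simp
  next
    assume "lt \<one>\<^bsub>G\<^esub> (inv\<^bsub>G\<^esub> g)"
    then have "lt (g \<otimes>\<^bsub>G\<^esub> \<one>\<^bsub>G\<^esub>) (g \<otimes>\<^bsub>G\<^esub> inv\<^bsub>G\<^esub> g)"
      using lo g unfolding left_order_def by blast
    then show "lt g \<one>\<^bsub>G\<^esub>" using g by simp
  qed
  moreover have "\<not> (lt \<one>\<^bsub>G\<^esub> g \<and> lt \<one>\<^bsub>G\<^esub> (inv\<^bsub>G\<^esub> g))"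
    using left_order_pos_mult[OF G lo g G.inv_closed[OF g]] irrefl g by auto
  ultimately show ?thesis by blast
qed

definition cone_order :: "('a, 'm) monoid_scheme \<Rightarrow> 'a set \<Rightarrow> 'a \<Rightarrow> 'a \<Rightarrow> bool" where
  "cone_order G P g h \<longleftrightarrow> g \<in> carrier G \<and> h \<in> carrier G \<and> inv\<^bsub>G\<^esub> g \<otimes>\<^bsub>G\<^esub> h \<in> P"

lemma
  assumes "group G" and P: "P \<subseteq> carrier G"
    and mult: "\<And>g h. g \<in> P \<Longrightarrow> h \<in> P \<Longrightarrow> g \<otimes>\<^bsub>G\<^esub> h \<in> P"
    and one: "\<one>\<^bsub>G\<^esub> \<notin> P"
    and total: "\<And>g. g \<in> carrier G \<Longrightarrow> g \<noteq> \<one>\<^bsub>G\<^esub> \<Longrightarrow> g \<in> P \<or> inv\<^bsub>G\<^esub> g \<in> P"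
  shows left_order_cone_order: "left_order G (cone_order G P)"
    and positive_cone_cone_order: "positive_cone G (cone_order G P) = P"
proof -
  interpret G: group G by fact
  show "positive_cone G (cone_order G P) = P"
    using P by (auto simp: positive_cone_def cone_order_def)
  show "left_order G (cone_order G P)"
    unfolding left_order_def
  proof (intro conjI ballI impI)
    fix x assume "x \<in> carrier G"
    then show "\<not> cone_order G P x x" using one by (simp add: cone_order_def)
  next
    fix x y z assume xyz: "x \<in> carrier G" "y \<in> carrier G" "z \<in> carrier G"
      and "cone_order G P x y" "cone_order G P y z"
    then have "(inv\<^bsub>G\<^esub> x \<otimes>\<^bsub>G\<^esub> y) \<otimes>\<^bsub>G\<^esub> (inv\<^bsub>G\<^esub> y \<otimes>\<^bsub>G\<^esub> z) \<in> P"
      using mult by (simp add: cone_order_def)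
    moreover have "(inv\<^bsub>G\<^esub> x \<otimes>\<^bsub>G\<^esub> y) \<otimes>\<^bsub>G\<^esub> (inv\<^bsub>G\<^esub> y \<otimes>\<^bsub>G\<^esub> z) = inv\<^bsub>G\<^esub> x \<otimes>\<^bsub>G\<^esub> z"
      using xyz by (simp add: G.m_assoc flip: G.m_assoc[of y])
    ultimately show "cone_order G P x z" using xyz by (simp add: cone_order_def)
  next
    fix x y assume xy: "x \<in> carrier G" "y \<in> carrier G" "x \<noteq> y"
    then have "inv\<^bsub>G\<^esub> x \<otimes>\<^bsub>G\<^esub> y \<noteq> \<one>\<^bsub>G\<^esub>"
      by (metis G.inv_closed G.inv_inv G.l_inv G.inv_equality)
    then have "inv\<^bsub>G\<^esub> x \<otimes>\<^bsub>G\<^esub> y \<in> P \<or> inv\<^bsub>G\<^esub> (inv\<^bsub>G\<^esub> x \<otimes>\<^bsub>G\<^esub> y) \<in> P"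
      using total xy by simp
    then show "cone_order G P x y \<or> cone_order G P y x"
      using xy by (auto simp: cone_order_def G.inv_mult_group)
  next
    fix g h k assume ghk: "g \<in> carrier G" "h \<in> carrier G" "k \<in> carrier G" and "cone_order G P h k"
    moreover have "inv\<^bsub>G\<^esub> (g \<otimes>\<^bsub>G\<^esub> h) \<otimes>\<^bsub>G\<^esub> (g \<otimes>\<^bsub>G\<^esub> k) = inv\<^bsub>G\<^esub> h \<otimes>\<^bsub>G\<^esub> k"
      using ghk by (simp add: G.inv_mult_group G.m_assoc flip: G.m_assoc[of "inv\<^bsub>G\<^esub> g"])
    ultimately show "cone_order G P (g \<otimes>\<^bsub>G\<^esub> h) (g \<otimes>\<^bsub>G\<^esub> k)"
      by (simp add: cone_order_def)
  qed
qed

lemma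
  assumes "group G"
    and subadd: "\<And>g h. g \<in> carrier G \<Longrightarrow> h \<in> carrier G \<Longrightarrow> f (g \<otimes>\<^bsub>G\<^esub> h) \<le> f g + f h"
    and f_one: "f \<one>\<^bsub>G\<^esub> = 1"
    and f_inv: "\<And>g. g \<in> carrier G \<Longrightarrow> g \<noteq> \<one>\<^bsub>G\<^esub> \<Longrightarrow> f g + f (inv\<^bsub>G\<^esub> g) \<le> 1"
  defines "P \<equiv> {(g, n). g \<in> carrier G \<and> f g \<le> n}"
  shows left_order_DirProd_integer_group:
      "left_order (G \<times>\<times> integer_group) (cone_order (G \<times>\<times> integer_group) P)"
    and positive_cone_DirProd_integer_group:
      "positive_cone (G \<times>\<times> integer_group) (cone_order (G \<times>\<times> integer_group) P) = P"
proof -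
  interpret G: group G by fact
  have group: "group (G \<times>\<times> integer_group)" by (simp add: DirProd_group G.is_group)
  have carrier: "P \<subseteq> carrier (G \<times>\<times> integer_group)" by (auto simp: P_def)
  have mult: "x \<otimes>\<^bsub>G \<times>\<times> integer_group\<^esub> y \<in> P" if "x \<in> P" "y \<in> P" for x y
  proof -
    obtain g n h m where xy: "x = (g, n)" "y = (h, m)" by fastforce
    with that have "g \<in> carrier G" "h \<in> carrier G" "f g \<le> n" "f h \<le> m" by (simp_all add: P_def)
    with xy subadd[of g h] show ?thesis by (simp add: P_def)
  qed
  have one: "\<one>\<^bsub>G \<times>\<times> integer_group\<^esub> \<notin> P" by (simp add: P_def f_one)
  have total: "x \<in> P \<or> inv\<^bsub>G \<times>\<times> integer_group\<^esub> x \<in> P"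
    if x_carrier: "x \<in> carrier (G \<times>\<times> integer_group)" and x_one: "x \<noteq> \<one>\<^bsub>G \<times>\<times> integer_group\<^esub>" for x
  proof -
    obtain g n where x: "x = (g, n)" and g: "g \<in> carrier G" using x_carrier by auto
    have "f g \<le> n \<or> f (inv\<^bsub>G\<^esub> g) \<le> - n"
    proof (cases "g = \<one>\<^bsub>G\<^esub>")
      case True
      then show ?thesis using x_one x f_one by auto
    next
      case False
      then show ?thesis using f_inv[OF g] by linarith
    qed
    then show ?thesis using x g by (auto simp: P_def G.is_group)
  qed
  show "left_order (G \<times>\<times> integer_group) (cone_order (G \<times>\<times> integer_group) P)"
    by (rule left_order_cone_order[OF group carrier mult one total])
  show "positive_cone (G \<times>\<times> integer_group) (cone_order (G \<times>\<times> integer_group) P) = P"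
    by (rule positive_cone_cone_order[OF group carrier mult one total])
qed

section \<open>Evaluating words in a group\<close>

lemma
  assumes "word_monoid_hom Alph G \<pi>"
  shows word_monoid_hom_Nil: "\<pi> [] = \<one>\<^bsub>G\<^esub>"
    and word_monoid_hom_carrier: "w \<in> lists Alph \<Longrightarrow> \<pi> w \<in> carrier G"
    and word_monoid_hom_append: "u \<in> lists Alph \<Longrightarrow> v \<in> lists Alph \<Longrightarrow> \<pi> (u @ v) = \<pi> u \<otimes>\<^bsub>G\<^esub> \<pi> v"
  using assms unfolding word_monoid_hom_def by auto

lemma word_monoid_hom_Cons:
  assumes "word_monoid_hom Alph G \<pi>" and "c \<in> Alph" and "u \<in> lists Alph"
  shows "\<pi> (c # u) = \<pi> [c] \<otimes>\<^bsub>G\<^esub> \<pi> u"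
  using word_monoid_hom_append[OF assms(1), of "[c]" u] assms(2,3) by simp

lemma
  fixes G :: "('g, 'x) monoid_scheme"
  assumes "monoid G" and f: "\<And>c. f c \<in> carrier G"
  shows foldr_mult_carrier: "foldr (\<lambda>c g. f c \<otimes>\<^bsub>G\<^esub> g) w \<one>\<^bsub>G\<^esub> \<in> carrier G"
    and foldr_mult_append: "foldr (\<lambda>c g. f c \<otimes>\<^bsub>G\<^esub> g) (u @ v) \<one>\<^bsub>G\<^esub> =
      foldr (\<lambda>c g. f c \<otimes>\<^bsub>G\<^esub> g) u \<one>\<^bsub>G\<^esub> \<otimes>\<^bsub>G\<^esub> foldr (\<lambda>c g. f c \<otimes>\<^bsub>G\<^esub> g) v \<one>\<^bsub>G\<^esub>"
proof -
  interpret G: monoid G by fact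
  show carrier: "foldr (\<lambda>c g. f c \<otimes>\<^bsub>G\<^esub> g) w \<one>\<^bsub>G\<^esub> \<in> carrier G" for w
    by (induction w) (simp_all add: f)
  show "foldr (\<lambda>c g. f c \<otimes>\<^bsub>G\<^esub> g) (u @ v) \<one>\<^bsub>G\<^esub> =
      foldr (\<lambda>c g. f c \<otimes>\<^bsub>G\<^esub> g) u \<one>\<^bsub>G\<^esub> \<otimes>\<^bsub>G\<^esub> foldr (\<lambda>c g. f c \<otimes>\<^bsub>G\<^esub> g) v \<one>\<^bsub>G\<^esub>"
    by (induction u) (simp_all add: carrier f G.m_assoc)
qed

lemma finitely_generated_group_word_monoid_hom:
  assumes "group G" and "finite Alph" and \<pi>: "word_monoid_hom Alph G \<pi>" and onto: "\<pi> ` lists Alph = carrier G"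
  shows "finitely_generated_group G"
proof -
  interpret G: group G by fact
  let ?S = "(\<lambda>c. \<pi> [c]) ` Alph"
  have S: "?S \<subseteq> carrier G" using word_monoid_hom_carrier[OF \<pi>] by auto
  have "\<pi> w \<in> generate G ?S" if "w \<in> lists Alph" for w
    using that
  proof (induction w)
    case Nil
    then show ?case using generate.one by (simp add: word_monoid_hom_Nil[OF \<pi>])
  next
    case (Cons c w)
    then have c: "c \<in> Alph" and w: "w \<in> lists Alph" by simp_all
    have "\<pi> (c # w) = \<pi> [c] \<otimes>\<^bsub>G\<^esub> \<pi> w" using word_monoid_hom_Cons[OF \<pi> c w] .
    moreover have "\<pi> [c] \<in> generate G ?S" using c by (intro generate.incl imageI)
    ultimately show ?case using generate.eng Cons.IH by metis
  qed
  then have "carrier G \<subseteq> generate G ?S" unfolding onto[symmetric] image_subset_iff by blast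
  with G.generate_incl[OF S] have "generate G ?S = carrier G" by (simp add: subset_antisym)
  then show ?thesis
    unfolding finitely_generated_group_def using S \<open>finite Alph\<close> by (intro exI[of _ ?S]) simp
qed

text \<open>A negative element h is spelled by a positive word for its inverse, reversed and written
  in the inverted letters e1, followed by the marker t.\<close>

definition signed_cone_lang :: "(nat \<Rightarrow> nat) \<Rightarrow> (nat \<Rightarrow> nat) \<Rightarrow> nat \<Rightarrow> nat list set \<Rightarrow> nat list set" where
  "signed_cone_lang e0 e1 t L = map e0 ` L \<union> conc (map e1 ` rev ` L) {[t]}"

lemma regular_language_signed_cone_lang:
  assumes L: "regular_language Alph' L"
    and "inj_on e0 Alph'" "e0 ` Alph' \<subseteq> Alph" and "inj_on e1 Alph'" "e1 ` Alph' \<subseteq> Alph"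
    and "t \<in> Alph"
  shows "regular_language Alph (signed_cone_lang e0 e1 t L)"
proof -
  have "regular_language Alph (map e0 ` L)"
    by (rule regular_language_map[OF L]) fact+
  moreover have "regular_language Alph (map e1 ` rev ` L)"
    by (rule regular_language_map[OF regular_language_rev[OF L]]) fact+
  moreover have "regular_language Alph {[t]}"
    by (rule regular_language_singleton) fact
  ultimately show ?thesis
    by (simp add: signed_cone_lang_def regular_language_Un regular_language_conc)
qed

context
  fixes H :: "('h, 'x) monoid_scheme" and G :: "('g, 'y) monoid_scheme"
    and \<phi> :: "'h \<Rightarrow> 'g" and \<pi>H :: "nat list \<Rightarrow> 'h" and \<pi> :: "nat list \<Rightarrow> 'g" and Alph' :: "nat set"
  assumes \<phi>: "group_hom H G \<phi>" and \<pi>H: "word_monoid_hom Alph' H \<pi>H"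
    and \<pi>_Nil: "\<pi> [] = \<one>\<^bsub>G\<^esub>" and \<pi>_append: "\<And>u v. \<pi> (u @ v) = \<pi> u \<otimes>\<^bsub>G\<^esub> \<pi> v"
begin

interpretation \<phi>: group_hom H G \<phi> by (rule \<phi>)

lemma map_word_hom:
  assumes "\<And>c. c \<in> Alph' \<Longrightarrow> \<pi> [e c] = \<phi> (\<pi>H [c])" and "u \<in> lists Alph'"
  shows "\<pi> (map e u) = \<phi> (\<pi>H u)"
  using assms(2)
proof (induction u)
  case (Cons c u)
  have "\<pi> (map e (c # u)) = \<pi> [e c] \<otimes>\<^bsub>G\<^esub> \<pi> (map e u)"
    using \<pi>_append[of "[e c]" "map e u"] by simp
  then show ?case
    using Cons assms(1) word_monoid_hom_Cons[OF \<pi>H, of c u] word_monoid_hom_carrier[OF \<pi>H] by simp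
qed (simp add: \<pi>_Nil word_monoid_hom_Nil[OF \<pi>H])

lemma map_rev_word_hom_inv:
  assumes "\<And>c. c \<in> Alph' \<Longrightarrow> \<pi> [e c] = \<phi> (inv\<^bsub>H\<^esub> (\<pi>H [c]))" and "u \<in> lists Alph'"
  shows "\<pi> (map e (rev u)) = \<phi> (inv\<^bsub>H\<^esub> (\<pi>H u))"
  using assms(2)
proof (induction u)
  case (Cons c u)
  have "\<pi> (map e (rev (c # u))) = \<pi> (map e (rev u)) \<otimes>\<^bsub>G\<^esub> \<pi> [e c]"
    using \<pi>_append[of "map e (rev u)" "[e c]"] by simp
  then show ?case
    using Cons assms(1) word_monoid_hom_Cons[OF \<pi>H, of c u] word_monoid_hom_carrier[OF \<pi>H]
    by (simp add: \<phi>.G.inv_mult_group)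
qed (simp add: \<pi>_Nil word_monoid_hom_Nil[OF \<pi>H])

context
  fixes lt :: "'h \<Rightarrow> 'h \<Rightarrow> bool" and L :: "nat list set" and e0 e1 :: "nat \<Rightarrow> nat" and t :: nat
  assumes lo: "left_order H lt" and L: "L \<subseteq> lists Alph'" and cone: "\<pi>H ` L = positive_cone H lt"
    and e0: "\<And>c. c \<in> Alph' \<Longrightarrow> \<pi> [e0 c] = \<phi> (\<pi>H [c])"
    and e1: "\<And>c. c \<in> Alph' \<Longrightarrow> \<pi> [e1 c] = \<phi> (inv\<^bsub>H\<^esub> (\<pi>H [c]))"
begin

abbreviation signed_value :: "'h \<Rightarrow> 'g" where
  "signed_value h \<equiv> if lt \<one>\<^bsub>H\<^esub> h then \<phi> h else \<phi> h \<otimes>\<^bsub>G\<^esub> \<pi> [t]"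

lemma cone_image_iff: "h \<in> \<pi>H ` L \<longleftrightarrow> h \<in> carrier H \<and> lt \<one>\<^bsub>H\<^esub> h"
  using cone by (simp add: positive_cone_def)

lemma cone_word_value:
  assumes "u \<in> L"
  shows "\<pi>H u \<in> carrier H" "lt \<one>\<^bsub>H\<^esub> (\<pi>H u)" "\<pi>H u \<noteq> \<one>\<^bsub>H\<^esub>"
proof -
  have "\<pi>H u \<in> \<pi>H ` L" using assms by (rule imageI)
  then show "\<pi>H u \<in> carrier H" "lt \<one>\<^bsub>H\<^esub> (\<pi>H u)" using cone_image_iff by simp_all
  moreover have "\<not> lt \<one>\<^bsub>H\<^esub> \<one>\<^bsub>H\<^esub>" using lo unfolding left_order_def by blast
  ultimately show "\<pi>H u \<noteq> \<one>\<^bsub>H\<^esub>" by metis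
qed

lemma signed_cone_lang_image_subset:
  "\<pi> ` signed_cone_lang e0 e1 t L \<subseteq> signed_value ` (carrier H - {\<one>\<^bsub>H\<^esub>})"
proof
  fix g assume "g \<in> \<pi> ` signed_cone_lang e0 e1 t L"
  then consider u where "u \<in> L" "g = \<pi> (map e0 u)" | u where "u \<in> L" "g = \<pi> (map e1 (rev u) @ [t])"
    by (auto simp: signed_cone_lang_def conc_def)
  then show "g \<in> signed_value ` (carrier H - {\<one>\<^bsub>H\<^esub>})"
  proof cases
    case 1
    note u = cone_word_value[OF 1(1)]
    have "g = signed_value (\<pi>H u)" using 1 u map_word_hom[OF e0 subsetD[OF L 1(1)]] by simp
    moreover have "\<pi>H u \<in> carrier H - {\<one>\<^bsub>H\<^esub>}" using u by simp
    ultimately show ?thesis by (rule image_eqI)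
  next
    case 2
    note u = cone_word_value[OF 2(1)]
    have inv: "\<not> lt \<one>\<^bsub>H\<^esub> (inv\<^bsub>H\<^esub> (\<pi>H u))" "inv\<^bsub>H\<^esub> (\<pi>H u) \<in> carrier H - {\<one>\<^bsub>H\<^esub>}"
      using left_order_pos_inv_iff[OF \<phi>.G.is_group lo u(1,3)] u by simp_all
    have "g = \<phi> (inv\<^bsub>H\<^esub> (\<pi>H u)) \<otimes>\<^bsub>G\<^esub> \<pi> [t]"
      using 2 map_rev_word_hom_inv[OF e1 subsetD[OF L 2(1)]] \<pi>_append[of "map e1 (rev u)" "[t]"] by simp
    then have "g = signed_value (inv\<^bsub>H\<^esub> (\<pi>H u))" using inv(1) by simp
    then show ?thesis using inv(2) by (rule image_eqI)
  qed
qed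

lemma signed_cone_lang_image_supset:
  "signed_value ` (carrier H - {\<one>\<^bsub>H\<^esub>}) \<subseteq> \<pi> ` signed_cone_lang e0 e1 t L"
proof
  fix g assume "g \<in> signed_value ` (carrier H - {\<one>\<^bsub>H\<^esub>})"
  then obtain h where "h \<in> carrier H - {\<one>\<^bsub>H\<^esub>}" and g: "g = signed_value h" by (rule imageE)
  then have h: "h \<in> carrier H" "h \<noteq> \<one>\<^bsub>H\<^esub>" by simp_all
  show "g \<in> \<pi> ` signed_cone_lang e0 e1 t L"
  proof (cases "lt \<one>\<^bsub>H\<^esub> h")
    case True
    then have "h \<in> \<pi>H ` L" using cone_image_iff h by simp
    then obtain u where u: "h = \<pi>H u" "u \<in> L" by (rule imageE)
    then have "g = \<pi> (map e0 u)" using g True map_word_hom[OF e0 subsetD[OF L u(2)]] by simp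
    moreover have "map e0 u \<in> signed_cone_lang e0 e1 t L"
      using u by (simp add: signed_cone_lang_def)
    ultimately show ?thesis by (rule image_eqI)
  next
    case False
    then have "inv\<^bsub>H\<^esub> h \<in> \<pi>H ` L"
      using cone_image_iff h left_order_pos_inv_iff[OF \<phi>.G.is_group lo h] by simp
    then obtain u where u: "inv\<^bsub>H\<^esub> h = \<pi>H u" "u \<in> L" by (rule imageE)
    have "\<pi> (map e1 (rev u) @ [t]) = \<phi> (inv\<^bsub>H\<^esub> (\<pi>H u)) \<otimes>\<^bsub>G\<^esub> \<pi> [t]"
      using map_rev_word_hom_inv[OF e1 subsetD[OF L u(2)]] \<pi>_append[of "map e1 (rev u)" "[t]"] by simp
    also have "\<dots> = g" using g False h u(1)[symmetric] by simp
    finally have "g = \<pi> (map e1 (rev u) @ [t])" ..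
    moreover have "map e1 (rev u) @ [t] \<in> signed_cone_lang e0 e1 t L"
      using u by (auto simp: signed_cone_lang_def conc_def)
    ultimately show ?thesis by (rule image_eqI)
  qed
qed

lemma image_signed_cone_lang: "\<pi> ` signed_cone_lang e0 e1 t L = signed_value ` (carrier H - {\<one>\<^bsub>H\<^esub>})"
  using signed_cone_lang_image_subset signed_cone_lang_image_supset by (rule equalityI)

end

end

section \<open>The free product as a group\<close>

fun fp_elem :: "('a, 'm) monoid_scheme \<Rightarrow> ('b, 'n) monoid_scheme \<Rightarrow> 'a + 'b \<Rightarrow> bool" where
  "fp_elem A B (Inl a) \<longleftrightarrow> a \<in> carrier A"
| "fp_elem A B (Inr b) \<longleftrightarrow> b \<in> carrier B"

fun fp_trivial :: "('a, 'm) monoid_scheme \<Rightarrow> ('b, 'n) monoid_scheme \<Rightarrow> 'a + 'b \<Rightarrow> bool" where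
  "fp_trivial A B (Inl a) \<longleftrightarrow> a = \<one>\<^bsub>A\<^esub>"
| "fp_trivial A B (Inr b) \<longleftrightarrow> b = \<one>\<^bsub>B\<^esub>"

fun fp_factor_mult :: "('a, 'm) monoid_scheme \<Rightarrow> ('b, 'n) monoid_scheme \<Rightarrow> 'a + 'b \<Rightarrow> 'a + 'b \<Rightarrow> 'a + 'b" where
  "fp_factor_mult A B (Inl a) (Inl a') = Inl (a \<otimes>\<^bsub>A\<^esub> a')"
| "fp_factor_mult A B (Inr b) (Inr b') = Inr (b \<otimes>\<^bsub>B\<^esub> b')"
| "fp_factor_mult A B x y = x"

fun fp_factor_inv :: "('a, 'm) monoid_scheme \<Rightarrow> ('b, 'n) monoid_scheme \<Rightarrow> 'a + 'b \<Rightarrow> 'a + 'b" where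
  "fp_factor_inv A B (Inl a) = Inl (inv\<^bsub>A\<^esub> a)"
| "fp_factor_inv A B (Inr b) = Inr (inv\<^bsub>B\<^esub> b)"

text \<open>fp_cons is only meaningful for nontrivial letters; fp_factor_cons multiplies by an
  arbitrary element of A or B.\<close>
definition fp_factor_cons :: "('a, 'm) monoid_scheme \<Rightarrow> ('b, 'n) monoid_scheme \<Rightarrow> 'a + 'b \<Rightarrow> ('a + 'b) list \<Rightarrow> ('a + 'b) list" where
  "fp_factor_cons A B x w = (if fp_trivial A B x then w else fp_cons A B x w)"

definition fp_inv :: "('a, 'm) monoid_scheme \<Rightarrow> ('b, 'n) monoid_scheme \<Rightarrow> ('a + 'b) list \<Rightarrow> ('a + 'b) list" where
  "fp_inv A B w = rev (map (fp_factor_inv A B) w)"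

lemma same_factor_iff: "same_factor x y \<longleftrightarrow> (isl x \<longleftrightarrow> isl y)"
  by (cases x; cases y) auto

lemma isl_fp_factor_inv [simp]: "isl (fp_factor_inv A B x) = isl x"
  by (cases x) auto

lemma isl_fp_factor_mult: "same_factor x y \<Longrightarrow> isl (fp_factor_mult A B x y) = isl x"
  by (cases x; cases y) auto

lemma fp_letter_iff: "fp_letter A B x \<longleftrightarrow> fp_elem A B x \<and> \<not> fp_trivial A B x"
  by (cases x) auto

lemma fp_reduced_Nil [simp]: "fp_reduced A B []"
  by (simp add: fp_reduced_def)

lemma fp_reduced_Cons:
  "fp_reduced A B (x # w) \<longleftrightarrow> fp_letter A B x \<and> fp_reduced A B w \<and> (w = [] \<or> \<not> same_factor x (hd w))"
proof
  assume h: "fp_reduced A B (x # w)"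
  have "\<not> same_factor (w ! i) (w ! Suc i)" if "Suc i < length w" for i
    using h that unfolding fp_reduced_def by (metis Suc_less_eq length_Cons nth_Cons_Suc)
  moreover have "w = [] \<or> \<not> same_factor x (hd w)"
    using h by (cases w) (auto simp: fp_reduced_def)
  ultimately show "fp_letter A B x \<and> fp_reduced A B w \<and> (w = [] \<or> \<not> same_factor x (hd w))"
    using h by (simp add: fp_reduced_def)
next
  assume h: "fp_letter A B x \<and> fp_reduced A B w \<and> (w = [] \<or> \<not> same_factor x (hd w))"
  have "\<not> same_factor ((x # w) ! i) ((x # w) ! Suc i)" if "Suc i < length (x # w)" for i
    using h that by (cases i; cases w) (auto simp: fp_reduced_def)
  then show "fp_reduced A B (x # w)" using h by (simp add: fp_reduced_def)
qed

lemma fp_reduced_append: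
  "fp_reduced A B (u @ v) \<longleftrightarrow> fp_reduced A B u \<and> fp_reduced A B v \<and>
     (u = [] \<or> v = [] \<or> \<not> same_factor (last u) (hd v))"
  by (induction u rule: induct_list012) (auto simp: fp_reduced_Cons)

lemma fp_cons_no_merge: "w = [] \<or> \<not> same_factor x (hd w) \<Longrightarrow> fp_cons A B x w = x # w"
  by (cases x; cases w; cases "hd w") auto

lemma fp_cons_merge:
  "same_factor x y \<Longrightarrow>
    fp_cons A B x (y # w) = (if fp_trivial A B (fp_factor_mult A B x y) then w else fp_factor_mult A B x y # w)"
  by (cases x; cases y) (auto simp: Let_def)

lemma foldr_fp_cons_reduced: "fp_reduced A B (p @ u) \<Longrightarrow> foldr (fp_cons A B) p u = p @ u"
  by (induction p) (auto simp: fp_reduced_Cons fp_cons_no_merge)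

lemma carrier_free_product: "carrier (free_product A B) = {w. fp_reduced A B w}"
  and mult_free_product: "w \<otimes>\<^bsub>free_product A B\<^esub> v = foldr (fp_cons A B) w v"
  and one_free_product: "\<one>\<^bsub>free_product A B\<^esub> = []"
  by (simp_all add: free_product_def)

locale fp_groups = A: group A + B: group B
  for A :: "('a, 'm) monoid_scheme" and B :: "('b, 'n) monoid_scheme"
begin

abbreviation "red \<equiv> fp_reduced A B"
abbreviation "fc \<equiv> fp_cons A B"
abbreviation "fcons \<equiv> fp_factor_cons A B"
abbreviation "F \<equiv> free_product A B"

lemma fp_elem_factor_mult: "fp_elem A B x \<Longrightarrow> fp_elem A B y \<Longrightarrow> fp_elem A B (fp_factor_mult A B x y)"
  by (cases x; cases y) auto

lemma same_factor_fp_factor_mult: "same_factor x y \<Longrightarrow> same_factor (fp_factor_mult A B x y) z \<longleftrightarrow> same_factor x z"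
  by (cases x; cases y; cases z) auto

lemma fp_factor_mult_assoc:
  "\<lbrakk>same_factor x y; same_factor y z; fp_elem A B x; fp_elem A B y; fp_elem A B z\<rbrakk> \<Longrightarrow>
    fp_factor_mult A B (fp_factor_mult A B x y) z = fp_factor_mult A B x (fp_factor_mult A B y z)"
  by (cases x; cases y; cases z) (auto simp: A.m_assoc B.m_assoc)

lemma fp_factor_mult_trivial_left:
  "\<lbrakk>fp_trivial A B x; same_factor x y; fp_elem A B y\<rbrakk> \<Longrightarrow> fp_factor_mult A B x y = y"
  by (cases x; cases y) auto

lemma fp_factor_mult_trivial_right:
  "\<lbrakk>fp_trivial A B y; same_factor x y; fp_elem A B x\<rbrakk> \<Longrightarrow> fp_factor_mult A B x y = x"
  by (cases x; cases y) auto

lemma fp_letter_factor_inv: "fp_letter A B x \<Longrightarrow> fp_letter A B (fp_factor_inv A B x)"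
  by (cases x) auto

lemma fp_factor_inv_inv: "fp_elem A B x \<Longrightarrow> fp_factor_inv A B (fp_factor_inv A B x) = x"
  by (cases x) auto

lemma fp_cons_factor_inv_left: "fp_letter A B x \<Longrightarrow> fc (fp_factor_inv A B x) (x # w) = w"
  and fp_cons_factor_inv_right: "fp_letter A B x \<Longrightarrow> fc x (fp_factor_inv A B x # w) = w"
  by (cases x; simp)+

lemma fp_trivial_factor_mult_iff:
  "\<lbrakk>same_factor x y; fp_elem A B x; fp_elem A B y\<rbrakk> \<Longrightarrow>
    fp_trivial A B (fp_factor_mult A B x y) \<longleftrightarrow> x = fp_factor_inv A B y"
  by (cases x; cases y) (auto simp: A.inv_equality B.inv_equality)

lemma fp_cons_reduced: "fp_letter A B x \<Longrightarrow> red w \<Longrightarrow> red (fc x w)"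
proof (cases "w = [] \<or> \<not> same_factor x (hd w)")
  case False
  assume "fp_letter A B x" "red w"
  then obtain y w' where w: "w = y # w'" "same_factor x y" "fp_letter A B y" "red w'"
    "w' = [] \<or> \<not> same_factor y (hd w')"
    using False by (cases w) (auto simp: fp_reduced_Cons)
  then show ?thesis
    using \<open>fp_letter A B x\<close> by (auto simp: fp_cons_merge fp_reduced_Cons fp_letter_iff fp_elem_factor_mult
        same_factor_fp_factor_mult same_factor_iff isl_fp_factor_mult)
qed (simp_all add: fp_cons_no_merge fp_reduced_Cons)

lemma fcons_reduced: "fp_elem A B x \<Longrightarrow> red w \<Longrightarrow> red (fcons x w)"
  by (simp add: fp_factor_cons_def fp_cons_reduced fp_letter_iff)

lemma foldr_fp_cons_reduced_closed: "red u \<Longrightarrow> red v \<Longrightarrow> red (foldr fc u v)"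
  by (induction u) (simp_all add: fp_reduced_Cons fp_cons_reduced)

lemma fcons_no_merge: "z = [] \<or> \<not> same_factor d (hd z) \<Longrightarrow> fcons d z = (if fp_trivial A B d then z else d # z)"
  by (simp add: fp_factor_cons_def fp_cons_no_merge)

lemma fcons_fcons_no_merge:
  assumes xd: "same_factor x d" "fp_elem A B x" "fp_elem A B d" and z: "z = [] \<or> \<not> same_factor x (hd z)"
  shows "fcons x (fcons d z) = fcons (fp_factor_mult A B x d) z"
proof -
  have z': "z = [] \<or> \<not> same_factor e (hd z)" if "same_factor x e" for e
    using z that by (auto simp: same_factor_iff)
  show ?thesis
  proof (cases "fp_trivial A B d")
    case True
    then show ?thesis using xd by (simp add: fp_factor_cons_def fp_factor_mult_trivial_right)
  next
    case d: False
    then have "fcons d z = d # z" using z'[OF xd(1)] by (simp add: fcons_no_merge)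
    moreover have "fcons x (d # z) = fcons (fp_factor_mult A B x d) z"
    proof (cases "fp_trivial A B x")
      case True
      then show ?thesis using xd d z'[OF xd(1)] by (simp add: fp_factor_cons_def fp_factor_mult_trivial_left fp_cons_no_merge)
    next
      case False
      have "z = [] \<or> \<not> same_factor (fp_factor_mult A B x d) (hd z)"
        using z'[of "fp_factor_mult A B x d"] xd(1) by (simp add: same_factor_iff isl_fp_factor_mult)
      then show ?thesis using False xd(1) by (simp add: fp_factor_cons_def fp_cons_merge fp_cons_no_merge)
    qed
    ultimately show ?thesis by simp
  qed
qed

lemma fp_reduced_split_factor:
  assumes "red z"
  obtains d z' where "same_factor x d" "fp_elem A B d" "z = fcons d z'" "red z'"
    "z' = [] \<or> \<not> same_factor x (hd z')"
proof (cases "z \<noteq> [] \<and> same_factor x (hd z)")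
  case True
  then obtain d z' where "z = d # z'" "same_factor x d" by (cases z) auto
  with assms that show ?thesis
    by (auto simp: fp_reduced_Cons fcons_no_merge fp_letter_iff same_factor_iff)
next
  case False
  define d where "d = (if isl x then Inl \<one>\<^bsub>A\<^esub> else Inr \<one>\<^bsub>B\<^esub>)"
  have "same_factor x d" "fp_elem A B d" "fp_trivial A B d" by (cases x; simp add: d_def)+
  with assms False that show ?thesis by (auto simp: fp_factor_cons_def)
qed

text \<open>van der Waerden's argument: the factors act on reduced words, and associativity of the
  free product follows from the action laws.\<close>

lemma fcons_fcons:
  assumes "fp_elem A B x" "fp_elem A B y" "same_factor x y" "red z"
  shows "fcons x (fcons y z) = fcons (fp_factor_mult A B x y) z"
proof -
  obtain d z' where d: "same_factor x d" "fp_elem A B d" "z = fcons d z'"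
    and z': "z' = [] \<or> \<not> same_factor x (hd z')"
    using fp_reduced_split_factor[OF \<open>red z\<close>] by metis
  have y: "z' = [] \<or> \<not> same_factor y (hd z')" and xy: "z' = [] \<or> \<not> same_factor (fp_factor_mult A B x y) (hd z')"
    using z' assms(3) by (auto simp: same_factor_iff isl_fp_factor_mult)
  have "fcons x (fcons y z) = fcons x (fcons (fp_factor_mult A B y d) z')"
    using assms d y by (simp add: fcons_fcons_no_merge same_factor_iff)
  also have "\<dots> = fcons (fp_factor_mult A B x (fp_factor_mult A B y d)) z'"
    using assms d z' by (intro fcons_fcons_no_merge) (auto simp: fp_elem_factor_mult same_factor_iff isl_fp_factor_mult)
  also have "\<dots> = fcons (fp_factor_mult A B x y) z"
    using assms d xy by (simp add: fcons_fcons_no_merge fp_factor_mult_assoc fp_elem_factor_mult same_factor_iff isl_fp_factor_mult)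
  finally show ?thesis .
qed

lemma foldr_fcons:
  assumes "fp_elem A B x" "red r" "red w"
  shows "foldr fc (fcons x r) w = fcons x (foldr fc r w)"
proof -
  have simple: "foldr fc (fcons e r') w = fcons e (foldr fc r' w)"
    if "r' = [] \<or> \<not> same_factor e (hd r')" for e r'
    using that by (simp add: fp_factor_cons_def fp_cons_no_merge)
  obtain d r' where d: "same_factor x d" "fp_elem A B d" "r = fcons d r'" "red r'"
    and r': "r' = [] \<or> \<not> same_factor x (hd r')"
    using fp_reduced_split_factor[OF \<open>red r\<close>] by metis
  have xd: "r' = [] \<or> \<not> same_factor (fp_factor_mult A B x d) (hd r')" and d': "r' = [] \<or> \<not> same_factor d (hd r')"
    using r' d(1) by (auto simp: same_factor_iff isl_fp_factor_mult)
  have "foldr fc (fcons x r) w = foldr fc (fcons (fp_factor_mult A B x d) r') w"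
    using assms d r' by (simp add: fcons_fcons_no_merge)
  also have "\<dots> = fcons (fp_factor_mult A B x d) (foldr fc r' w)"
    using simple xd by blast
  also have "\<dots> = fcons x (fcons d (foldr fc r' w))"
    using assms d by (simp add: fcons_fcons foldr_fp_cons_reduced_closed)
  also have "\<dots> = fcons x (foldr fc r w)"
    using simple d' d(3) by simp
  finally show ?thesis .
qed

lemma foldr_fp_cons_assoc:
  assumes "red u" "red v" "red w"
  shows "foldr fc (foldr fc u v) w = foldr fc u (foldr fc v w)"
  using assms(1)
proof (induction u)
  case (Cons x u)
  then have x: "fp_letter A B x" and u: "red u" by (simp_all add: fp_reduced_Cons)
  then have "foldr fc (foldr fc (x # u) v) w = foldr fc (fcons x (foldr fc u v)) w"
    by (simp add: fp_factor_cons_def fp_letter_iff)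
  also have "\<dots> = fcons x (foldr fc u (foldr fc v w))"
    using x u assms Cons.IH by (simp add: foldr_fcons foldr_fp_cons_reduced_closed fp_letter_iff)
  finally show ?case using x by (simp add: fp_factor_cons_def fp_letter_iff)
qed simp

lemma fp_inv_Cons: "fp_inv A B (x # w) = fp_inv A B w @ [fp_factor_inv A B x]"
  by (simp add: fp_inv_def)

lemma fp_inv_eq_Nil_iff [simp]: "fp_inv A B w = [] \<longleftrightarrow> w = []"
  by (simp add: fp_inv_def)

lemma last_fp_inv: "r \<noteq> [] \<Longrightarrow> last (fp_inv A B r) = fp_factor_inv A B (hd r)"
  by (cases r) (auto simp: fp_inv_def)

lemma fp_inv_reduced: "red w \<Longrightarrow> red (fp_inv A B w)"
proof (induction w)
  case (Cons x w)
  then have x: "fp_letter A B x" and w: "red w" "w = [] \<or> \<not> same_factor x (hd w)"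
    by (simp_all add: fp_reduced_Cons)
  then have "fp_inv A B w = [] \<or> \<not> same_factor (last (fp_inv A B w)) (fp_factor_inv A B x)"
    by (cases "w = []") (auto simp: last_fp_inv same_factor_iff)
  then show ?case
    using Cons.IH w x by (simp add: fp_inv_Cons fp_reduced_append fp_reduced_Cons fp_letter_factor_inv)
qed (simp add: fp_inv_def)

lemma foldr_fp_inv_cancel: "red w \<Longrightarrow> foldr fc (fp_inv A B w) w = []"
  by (induction w) (simp_all add: fp_inv_def fp_reduced_Cons fp_cons_factor_inv_left)

lemma group_free_product: "group F"
proof (rule groupI)
  show "\<exists>y\<in>carrier F. y \<otimes>\<^bsub>F\<^esub> x = \<one>\<^bsub>F\<^esub>" if "x \<in> carrier F" for x
    using that by (auto simp: carrier_free_product mult_free_product one_free_product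
        intro!: bexI[of _ "fp_inv A B x"] fp_inv_reduced foldr_fp_inv_cancel)
qed (simp_all add: carrier_free_product mult_free_product one_free_product
    foldr_fp_cons_reduced_closed foldr_fp_cons_assoc)

lemma inv_free_product: "red w \<Longrightarrow> inv\<^bsub>F\<^esub> w = fp_inv A B w"
  using group.inv_equality[OF group_free_product, of "fp_inv A B w" w]
  by (simp add: carrier_free_product mult_free_product one_free_product fp_inv_reduced foldr_fp_inv_cancel)

end

section \<open>A quasimorphism on the free product\<close>

locale fp_ordered = fp_groups A B
  for A :: "('a, 'm) monoid_scheme" and B :: "('b, 'n) monoid_scheme" +
  fixes ltA :: "'a \<Rightarrow> 'a \<Rightarrow> bool" and ltB :: "'b \<Rightarrow> 'b \<Rightarrow> bool"
  assumes left_order_A: "left_order A ltA" and left_order_B: "left_order B ltB"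
begin

fun letter_neg :: "'a + 'b \<Rightarrow> int" where
  "letter_neg (Inl a) = (if ltA \<one>\<^bsub>A\<^esub> a then 0 else 1)"
| "letter_neg (Inr b) = (if ltB \<one>\<^bsub>B\<^esub> b then 0 else 1)"

definition junction :: "('a + 'b) list \<Rightarrow> ('a + 'b) list \<Rightarrow> int" where
  "junction p q = (if p \<noteq> [] \<and> q \<noteq> [] \<and> isl (last p) \<and> \<not> isl (hd q) then 1 else 0)"

fun weight :: "('a + 'b) list \<Rightarrow> int" where
  "weight [] = 0"
| "weight (x # w) = letter_neg x - junction [x] w + weight w"

definition threshold :: "('a + 'b) list \<Rightarrow> int" where
  "threshold w = (if w = [] then 1 else weight w)"

lemma junction_Nil [simp]: "junction [] q = 0" "junction p [] = 0"
  by (simp_all add: junction_def)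

lemma weight_append: "weight (p @ q) = weight p + weight q - junction p q"
proof (induction p)
  case (Cons x p)
  then show ?case by (cases "p = []") (simp_all add: junction_def)
qed simp

lemma letter_neg_factor_inv: "fp_letter A B x \<Longrightarrow> letter_neg x + letter_neg (fp_factor_inv A B x) = 1"
  using left_order_pos_inv_iff[OF A.is_group left_order_A] left_order_pos_inv_iff[OF B.is_group left_order_B]
  by (cases x) auto

lemma letter_neg_factor_mult:
  "\<lbrakk>same_factor x y; fp_elem A B x; fp_elem A B y\<rbrakk> \<Longrightarrow>
    letter_neg (fp_factor_mult A B x y) \<le> letter_neg x + letter_neg y"
  using left_order_pos_mult[OF A.is_group left_order_A] left_order_pos_mult[OF B.is_group left_order_B]
  by (cases x; cases y) auto

text \<open>Inversion turns the A-B junctions of r into B-A junctions and vice versa, a reduced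
  word of length k has k - 1 junctions, and each letter or its inverse is negative.\<close>
lemma weight_fp_inv: "red r \<Longrightarrow> r \<noteq> [] \<Longrightarrow> weight r + weight (fp_inv A B r) = 1"
proof (induction r)
  case (Cons x r)
  then have x: "fp_letter A B x" and r: "red r" and alt: "r = [] \<or> isl x \<noteq> isl (hd r)"
    by (auto simp: fp_reduced_Cons same_factor_iff)
  show ?case
  proof (cases "r = []")
    case True
    then show ?thesis using letter_neg_factor_inv[OF x] by (simp add: fp_inv_def)
  next
    case False
    have "weight (fp_inv A B (x # r)) = weight (fp_inv A B r) + letter_neg (fp_factor_inv A B x)
        - junction (fp_inv A B r) [fp_factor_inv A B x]"
      by (simp add: fp_inv_Cons weight_append)
    then show ?thesis
      using Cons.IH[OF r False] letter_neg_factor_inv[OF x] alt False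
      by (auto simp: junction_def last_fp_inv)
  qed
qed simp

lemma fp_reduced_cancel_split:
  assumes "red v" "red w"
  obtains p r q where "w = p @ r" "v = fp_inv A B r @ q" "p = [] \<or> q = [] \<or> last p \<noteq> fp_factor_inv A B (hd q)"
proof -
  have "\<exists>p r q. w = p @ r \<and> v = fp_inv A B r @ q \<and> (p = [] \<or> q = [] \<or> last p \<noteq> fp_factor_inv A B (hd q))"
    using assms
  proof (induction v arbitrary: w)
    case Nil
    show ?case by (rule exI[of _ w], rule exI[of _ "[]"]) (simp add: fp_inv_def)
  next
    case (Cons y v)
    have y: "fp_letter A B y" and v: "red v" using Cons.prems by (simp_all add: fp_reduced_Cons)
    show ?case
    proof (cases "w \<noteq> [] \<and> last w = fp_factor_inv A B y")
      case True
      then have w: "w = butlast w @ [fp_factor_inv A B y]" by (metis append_butlast_last_id)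
      then have "red (butlast w)" using Cons.prems(2) fp_reduced_append by metis
      then obtain p r q where "butlast w = p @ r" "v = fp_inv A B r @ q"
        "p = [] \<or> q = [] \<or> last p \<noteq> fp_factor_inv A B (hd q)"
        using Cons.IH[OF v] by blast
      moreover have "y # v = fp_inv A B (r @ [fp_factor_inv A B y]) @ q"
        using calculation y by (simp add: fp_inv_def fp_factor_inv_inv fp_letter_iff)
      ultimately show ?thesis using w by (metis append.assoc)
    next
      case False
      then show ?thesis by (intro exI[of _ w] exI[of _ "[]"] exI[of _ "y # v"]) (auto simp: fp_inv_def)
    qed
  qed
  then show thesis using that by blast
qed

lemma foldr_fp_inv_append: "red (fp_inv A B r @ q) \<Longrightarrow> red r \<Longrightarrow> foldr fc r (fp_inv A B r @ q) = q"
proof (induction r arbitrary: q)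
  case (Cons x r)
  then have "foldr fc r (fp_inv A B r @ fp_factor_inv A B x # q) = fp_factor_inv A B x # q"
    by (simp add: fp_inv_Cons fp_reduced_Cons)
  then show ?case using Cons.prems by (simp add: fp_inv_Cons fp_reduced_Cons fp_cons_factor_inv_right)
qed (simp add: fp_inv_def)

lemma weight_cancel_le:
  assumes "red r"
  shows "weight p + weight q \<le> weight (p @ r) + weight (fp_inv A B r @ q)"
proof (cases "r = []")
  case False
  have "junction p r + junction (fp_inv A B r) q \<le> 1"
    using False by (simp add: junction_def last_fp_inv)
  then show ?thesis using weight_fp_inv[OF assms False] by (simp add: weight_append)
qed (simp add: fp_inv_def)

lemma weight_mult_no_cancel:
  assumes p: "red p" and q: "red q" and no_cancel: "p = [] \<or> q = [] \<or> last p \<noteq> fp_factor_inv A B (hd q)"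
  shows "weight (foldr fc p q) \<le> weight p + weight q \<and> (foldr fc p q = [] \<longrightarrow> p = [] \<and> q = [])"
proof (cases "p = [] \<or> q = []")
  case True
  then show ?thesis using foldr_fp_cons_reduced[of A B p "[]"] p by auto
next
  case False
  then obtain p' x y q' where px: "p = p' @ [x]" and qy: "q = y # q'"
    by (metis append_butlast_last_id list.exhaust)
  have p': "red p'" "fp_letter A B x" "p' = [] \<or> isl (last p') \<noteq> isl x"
    using p px by (auto simp: fp_reduced_append fp_reduced_Cons same_factor_iff)
  have q': "red q'" "fp_letter A B y" "q' = [] \<or> isl y \<noteq> isl (hd q')"
    using q qy by (auto simp: fp_reduced_Cons same_factor_iff)
  have weight_p: "weight p = weight p' + letter_neg x - junction p' [x]"
    using px by (simp add: weight_append)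
  show ?thesis
  proof (cases "same_factor x y")
    case False
    then have "red (p @ q)"
      unfolding fp_reduced_append[of A B p q] using p q px qy by simp
    then show ?thesis
      using foldr_fp_cons_reduced[of A B p q] qy by (simp add: weight_append junction_def)
  next
    case True
    let ?z = "fp_factor_mult A B x y"
    have "\<not> fp_trivial A B ?z"
      using no_cancel px qy p'(2) q'(2) True by (simp add: fp_trivial_factor_mult_iff fp_letter_iff)
    then have z: "fp_letter A B ?z" "isl ?z = isl x"
      using p'(2) q'(2) True by (simp_all add: fp_letter_iff fp_elem_factor_mult isl_fp_factor_mult)
    then have "red (p' @ ?z # q')"
      using p' q' True by (auto simp: fp_reduced_append fp_reduced_Cons same_factor_iff)
    moreover have "foldr fc p q = foldr fc p' (?z # q')"
      using px qy True \<open>\<not> fp_trivial A B ?z\<close> by (simp add: fp_cons_merge)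
    ultimately have "foldr fc p q = p' @ ?z # q'" by (simp add: foldr_fp_cons_reduced)
    moreover have "letter_neg ?z \<le> letter_neg x + letter_neg y"
      using True p'(2) q'(2) by (simp add: letter_neg_factor_mult fp_letter_iff)
    ultimately show ?thesis
      using weight_p qy z True by (simp add: weight_append junction_def same_factor_iff)
  qed
qed

lemma threshold_mult_le:
  assumes w: "red w" and v: "red v"
  shows "threshold (foldr fc w v) \<le> threshold w + threshold v"
proof (cases "w = [] \<or> v = []")
  case True
  then show ?thesis using foldr_fp_cons_reduced[of A B w "[]"] w by (auto simp: threshold_def)
next
  case False
  obtain p r q where prq: "w = p @ r" "v = fp_inv A B r @ q"
    and no_cancel: "p = [] \<or> q = [] \<or> last p \<noteq> fp_factor_inv A B (hd q)"
    using fp_reduced_cancel_split[OF v w] .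
  have p: "red p" "red r" and q: "red q" "red (fp_inv A B r @ q)"
    using w v prq fp_reduced_append by metis+
  have "foldr fc w v = foldr fc p q"
    using prq p q foldr_fp_inv_append by (simp add: foldr_append)
  moreover have "weight (foldr fc p q) \<le> weight p + weight q" and "foldr fc p q = [] \<Longrightarrow> p = [] \<and> q = []"
    using weight_mult_no_cancel[OF p(1) q(1) no_cancel] by blast+
  moreover have "weight p + weight q \<le> weight w + weight v"
    using weight_cancel_le[OF p(2)] prq by simp
  moreover have "weight w + weight v = 1" if "p = []" "q = []"
    using weight_fp_inv[OF p(2)] prq that False by simp
  ultimately show ?thesis using False by (auto simp: threshold_def)
qed

lemma threshold_fp_inv: "red w \<Longrightarrow> w \<noteq> [] \<Longrightarrow> threshold w + threshold (fp_inv A B w) = 1"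
  by (simp add: threshold_def weight_fp_inv)

end

section \<open>A regular left order on the free product times the integers\<close>

context fp_ordered
begin

abbreviation FZ :: "(('a + 'b) list \<times> int) monoid" where
  "FZ \<equiv> F \<times>\<times> integer_group"

lemma group_FZ: "group FZ"
  by (simp add: DirProd_group group_free_product)

definition fp_cone :: "(('a + 'b) list \<times> int) set" where
  "fp_cone = {(w, n). red w \<and> threshold w \<le> n}"

lemma
  shows left_order_fp_cone: "left_order FZ (cone_order FZ fp_cone)"
    and positive_cone_fp_cone: "positive_cone FZ (cone_order FZ fp_cone) = fp_cone"
proof -
  have "fp_cone = {(w, n). w \<in> carrier F \<and> threshold w \<le> n}"
    by (simp add: fp_cone_def carrier_free_product)
  moreover have "threshold (w \<otimes>\<^bsub>F\<^esub> v) \<le> threshold w + threshold v" if "w \<in> carrier F" "v \<in> carrier F" for w v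
    using that threshold_mult_le by (simp add: carrier_free_product mult_free_product)
  moreover have "threshold \<one>\<^bsub>F\<^esub> = 1" by (simp add: one_free_product threshold_def)
  moreover have "threshold w + threshold (inv\<^bsub>F\<^esub> w) \<le> 1" if "w \<in> carrier F" "w \<noteq> \<one>\<^bsub>F\<^esub>" for w
    using that threshold_fp_inv by (simp add: carrier_free_product one_free_product inv_free_product)
  ultimately show "left_order FZ (cone_order FZ fp_cone)" "positive_cone FZ (cone_order FZ fp_cone) = fp_cone"
    using left_order_DirProd_integer_group[OF group_free_product, of threshold]
      positive_cone_DirProd_integer_group[OF group_free_product, of threshold]
    by simp_all
qed

definition weighted :: "('a + 'b) list \<Rightarrow> ('a + 'b) list \<times> int" where
  "weighted w = (w, weight w)"

lemma weighted_singleton: "weighted [x] = ([x], letter_neg x)"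
  by (simp add: weighted_def)

lemma weighted_Cons:
  assumes "red (x # v)"
  shows "weighted (x # v) = weighted [x] \<otimes>\<^bsub>FZ\<^esub> (([], - junction [x] v) \<otimes>\<^bsub>FZ\<^esub> weighted v)"
  using assms by (simp add: weighted_def mult_free_product fp_reduced_Cons fp_cons_no_merge)

lemma weighted_Cons_Inr:
  "red (Inr b # v) \<Longrightarrow> weighted (Inr b # v) = weighted [Inr b] \<otimes>\<^bsub>FZ\<^esub> weighted v"
  by (simp add: weighted_Cons junction_def) (simp add: weighted_def mult_free_product)

lemma weighted_Cons_Inl_Inr:
  "red (Inl a # Inr b # v) \<Longrightarrow>
    weighted (Inl a # Inr b # v) = weighted [Inl a] \<otimes>\<^bsub>FZ\<^esub> (([], - 1) \<otimes>\<^bsub>FZ\<^esub> weighted (Inr b # v))"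
  by (simp add: weighted_Cons[of "Inl a"] junction_def)

end

locale fp_regular = fp_ordered A B ltA ltB
  for A :: "('a, 'm) monoid_scheme" and B :: "('b, 'n) monoid_scheme" and ltA ltB +
  fixes AlphA :: "nat set" and \<pi>A :: "nat list \<Rightarrow> 'a" and LA :: "nat list set"
    and AlphB :: "nat set" and \<pi>B :: "nat list \<Rightarrow> 'b" and LB :: "nat list set"
  assumes finite_AlphA: "finite AlphA" and hom_A: "word_monoid_hom AlphA A \<pi>A"
    and regular_LA: "regular_language AlphA LA" and cone_LA: "\<pi>A ` LA = positive_cone A ltA"
  assumes finite_AlphB: "finite AlphB" and hom_B: "word_monoid_hom AlphB B \<pi>B"
    and regular_LB: "regular_language AlphB LB" and cone_LB: "\<pi>B ` LB = positive_cone B ltB"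
begin

abbreviation code :: "nat \<Rightarrow> nat \<Rightarrow> nat" where
  "code k c \<equiv> prod_encode (k, c)"

abbreviation t_up :: nat where "t_up \<equiv> code 4 0"
abbreviation t_down :: nat where "t_down \<equiv> code 5 0"

definition Alph :: "nat set" where
  "Alph = code 0 ` AlphA \<union> code 1 ` AlphA \<union> code 2 ` AlphB \<union> code 3 ` AlphB \<union> {t_up, t_down}"

definition embA :: "'a \<Rightarrow> ('a + 'b) list \<times> int" where
  "embA a = (fcons (Inl a) [], 0)"

definition embB :: "'b \<Rightarrow> ('a + 'b) list \<times> int" where
  "embB b = (fcons (Inr b) [], 0)"

text \<open>Letters outside Alph are sent to the identity, so that word_eval is a homomorphism on
  all words and not only on lists Alph.\<close>
definition letter_value :: "nat \<Rightarrow> ('a + 'b) list \<times> int" where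
  "letter_value n = (case prod_decode n of (k, c) \<Rightarrow>
     if k = 0 \<and> c \<in> AlphA then embA (\<pi>A [c])
     else if k = 1 \<and> c \<in> AlphA then embA (inv\<^bsub>A\<^esub> (\<pi>A [c]))
     else if k = 2 \<and> c \<in> AlphB then embB (\<pi>B [c])
     else if k = 3 \<and> c \<in> AlphB then embB (inv\<^bsub>B\<^esub> (\<pi>B [c]))
     else if k = 4 then ([], 1)
     else if k = 5 then ([], - 1)
     else ([], 0))"

definition word_eval :: "nat list \<Rightarrow> ('a + 'b) list \<times> int" where
  "word_eval w = foldr (\<lambda>c g. letter_value c \<otimes>\<^bsub>FZ\<^esub> g) w \<one>\<^bsub>FZ\<^esub>"

lemma finite_Alph: "finite Alph"
  using finite_AlphA finite_AlphB by (simp add: Alph_def)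

lemma \<pi>A_carrier: "c \<in> AlphA \<Longrightarrow> \<pi>A [c] \<in> carrier A"
  and \<pi>B_carrier: "c \<in> AlphB \<Longrightarrow> \<pi>B [c] \<in> carrier B"
  using word_monoid_hom_carrier[OF hom_A] word_monoid_hom_carrier[OF hom_B] by simp_all

lemma group_hom_embA: "group_hom A FZ embA"
proof -
  have "embA \<in> hom A FZ"
  proof (rule homI)
    show "embA a \<in> carrier FZ" if "a \<in> carrier A" for a
      using that by (simp add: embA_def carrier_free_product fcons_reduced)
    show "embA (a \<otimes>\<^bsub>A\<^esub> b) = embA a \<otimes>\<^bsub>FZ\<^esub> embA b" if "a \<in> carrier A" "b \<in> carrier A" for a b
      using that foldr_fcons[of "Inl a" "[]" "fcons (Inl b) []"]
      by (simp add: embA_def mult_free_product fcons_fcons fcons_reduced)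
  qed
  then show ?thesis
    by (simp add: group_hom_def group_hom_axioms_def group_FZ A.is_group)
qed

lemma group_hom_embB: "group_hom B FZ embB"
proof -
  have "embB \<in> hom B FZ"
  proof (rule homI)
    show "embB b \<in> carrier FZ" if "b \<in> carrier B" for b
      using that by (simp add: embB_def carrier_free_product fcons_reduced)
    show "embB (a \<otimes>\<^bsub>B\<^esub> b) = embB a \<otimes>\<^bsub>FZ\<^esub> embB b" if "a \<in> carrier B" "b \<in> carrier B" for a b
      using that foldr_fcons[of "Inr a" "[]" "fcons (Inr b) []"]
      by (simp add: embB_def mult_free_product fcons_fcons fcons_reduced)
  qed
  then show ?thesis
    by (simp add: group_hom_def group_hom_axioms_def group_FZ B.is_group)
qed

lemma letter_value_carrier: "letter_value n \<in> carrier FZ"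
  using group_hom.hom_closed[OF group_hom_embA] group_hom.hom_closed[OF group_hom_embB]
    \<pi>A_carrier \<pi>B_carrier
  by (auto simp: letter_value_def carrier_free_product split: prod.split)

lemma word_eval_carrier: "word_eval w \<in> carrier FZ"
  unfolding word_eval_def by (rule foldr_mult_carrier[OF group.is_monoid[OF group_FZ] letter_value_carrier])

lemma word_eval_append: "word_eval (u @ v) = word_eval u \<otimes>\<^bsub>FZ\<^esub> word_eval v"
  unfolding word_eval_def by (rule foldr_mult_append[OF group.is_monoid[OF group_FZ] letter_value_carrier])

lemma word_eval_Nil [simp]: "word_eval [] = ([], 0)"
  by (simp add: word_eval_def one_free_product)

lemma word_eval_Cons: "word_eval (c # w) = letter_value c \<otimes>\<^bsub>FZ\<^esub> word_eval w"
  by (simp add: word_eval_def)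

lemma word_eval_singleton: "word_eval [c] = letter_value c"
  using letter_value_carrier[of c] monoid.r_one[OF group.is_monoid[OF group_FZ]] by (simp add: word_eval_def)

lemma word_eval_t_up: "word_eval [t_up] = ([], 1)" and word_eval_t_down: "word_eval [t_down] = ([], - 1)"
  by (simp_all add: word_eval_singleton letter_value_def)

lemma word_eval_replicate_t_up: "word_eval (replicate k t_up) = ([], int k)"
  by (induction k) (simp_all add: word_eval_Cons letter_value_def mult_free_product)

lemma word_eval_replicate_t_down: "word_eval (replicate k t_down) = ([], - int k)"
  by (induction k) (simp_all add: word_eval_Cons letter_value_def mult_free_product)

lemma word_monoid_hom_word_eval: "word_monoid_hom Alph FZ word_eval"
  unfolding word_monoid_hom_def by (intro conjI ballI word_eval_carrier word_eval_append) (simp add: one_free_product)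

definition langA :: "nat list set" where
  "langA = signed_cone_lang (code 0) (code 1) t_up LA"

definition langB :: "nat list set" where
  "langB = signed_cone_lang (code 2) (code 3) t_up LB"

text \<open>Normal forms: a reduced word is spelled letter by letter, with t_down inserted after
  every A-letter that is followed by a B-letter.\<close>
definition pair_lang :: "nat list set" where
  "pair_lang = conc langA (conc {[t_down]} langB)"

definition nfA_lang :: "nat list set" where
  "nfA_lang = conc (star pair_lang) (insert [] langA)"

definition nf_lang :: "nat list set" where
  "nf_lang = conc langB nfA_lang \<union> conc langA (insert [] (conc {[t_down]} (conc langB nfA_lang)))"

definition cone_lang :: "nat list set" where
  "cone_lang = conc (nf_lang \<union> {[t_up]}) (star {[t_up]})"

lemma regular_langA: "regular_language Alph langA"
  unfolding langA_def
  by (rule regular_language_signed_cone_lang[OF regular_LA]) (auto simp: inj_on_def Alph_def)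

lemma regular_langB: "regular_language Alph langB"
  unfolding langB_def
  by (rule regular_language_signed_cone_lang[OF regular_LB]) (auto simp: inj_on_def Alph_def)

lemma t_up_Alph: "t_up \<in> Alph" and t_down_Alph: "t_down \<in> Alph"
  by (simp_all add: Alph_def)

lemma regular_nfA_lang: "regular_language Alph nfA_lang"
  unfolding nfA_lang_def pair_lang_def
  by (intro regular_language_conc regular_language_star regular_language_insert_Nil regular_langA
      regular_langB regular_language_singleton t_down_Alph)

lemma regular_nf_lang: "regular_language Alph nf_lang"
  unfolding nf_lang_def
  by (intro regular_language_conc regular_language_Un regular_language_insert_Nil regular_langA
      regular_langB regular_nfA_lang regular_language_singleton t_down_Alph)

lemma regular_cone_lang: "regular_language Alph cone_lang"
  unfolding cone_lang_def
  by (intro regular_language_conc regular_language_star regular_language_Un regular_nf_lang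
      regular_language_singleton t_up_Alph)

lemma word_eval_langA: "word_eval ` langA = (\<lambda>a. weighted [Inl a]) ` (carrier A - {\<one>\<^bsub>A\<^esub>})"
proof -
  have "word_eval ` langA =
      (\<lambda>a. if ltA \<one>\<^bsub>A\<^esub> a then embA a else embA a \<otimes>\<^bsub>FZ\<^esub> word_eval [t_up]) ` (carrier A - {\<one>\<^bsub>A\<^esub>})"
    unfolding langA_def
    by (rule image_signed_cone_lang[OF group_hom_embA hom_A _ _ left_order_A
          regular_language_lists[OF regular_LA] cone_LA])
      (simp_all add: word_eval_append word_eval_singleton letter_value_def one_free_product)
  also have "\<dots> = (\<lambda>a. weighted [Inl a]) ` (carrier A - {\<one>\<^bsub>A\<^esub>})"
    by (rule image_cong) (auto simp: embA_def fp_factor_cons_def word_eval_t_up mult_free_product weighted_singleton)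
  finally show ?thesis .
qed

lemma word_eval_langB: "word_eval ` langB = (\<lambda>b. weighted [Inr b]) ` (carrier B - {\<one>\<^bsub>B\<^esub>})"
proof -
  have "word_eval ` langB =
      (\<lambda>b. if ltB \<one>\<^bsub>B\<^esub> b then embB b else embB b \<otimes>\<^bsub>FZ\<^esub> word_eval [t_up]) ` (carrier B - {\<one>\<^bsub>B\<^esub>})"
    unfolding langB_def
    by (rule image_signed_cone_lang[OF group_hom_embB hom_B _ _ left_order_B
          regular_language_lists[OF regular_LB] cone_LB])
      (simp_all add: word_eval_append word_eval_singleton letter_value_def one_free_product)
  also have "\<dots> = (\<lambda>b. weighted [Inr b]) ` (carrier B - {\<one>\<^bsub>B\<^esub>})"
    by (rule image_cong) (auto simp: embB_def fp_factor_cons_def word_eval_t_up mult_free_product weighted_singleton)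
  finally show ?thesis .
qed

lemma word_eval_Inl_t_down:
  assumes "word_eval sa = weighted [Inl a]" "word_eval v = weighted w" "red (Inl a # w)" "w \<noteq> []" "\<not> isl (hd w)"
  shows "word_eval (sa @ t_down # v) = weighted (Inl a # w)"
proof -
  obtain y w' where w: "w = y # w'" using assms(4) by (cases w) auto
  with assms(5) obtain b where "y = Inr b" by (cases y) auto
  with w show ?thesis
    using assms word_eval_append[of sa "[t_down] @ v"] word_eval_append[of "[t_down]" v]
    by (simp add: weighted_Cons_Inl_Inr word_eval_t_down fp_reduced_Cons)
qed

lemma word_eval_Inr:
  assumes "word_eval sb = weighted [Inr b]" "word_eval v = weighted w" "red (Inr b # w)"
  shows "word_eval (sb @ v) = weighted (Inr b # w)"
  using assms by (simp add: word_eval_append weighted_Cons_Inr)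

abbreviation nfA_words :: "('a + 'b) list set" where
  "nfA_words \<equiv> {w. red w \<and> (w = [] \<or> isl (hd w))}"

lemma red_Inr_Cons: "b \<in> carrier B \<Longrightarrow> b \<noteq> \<one>\<^bsub>B\<^esub> \<Longrightarrow> w \<in> nfA_words \<Longrightarrow> red (Inr b # w)"
  by (auto simp: fp_reduced_Cons same_factor_iff)

lemma langA_elim:
  assumes "sa \<in> langA"
  obtains a where "a \<in> carrier A" "a \<noteq> \<one>\<^bsub>A\<^esub>" "word_eval sa = weighted [Inl a]"
proof -
  have "word_eval sa \<in> (\<lambda>a. weighted [Inl a]) ` (carrier A - {\<one>\<^bsub>A\<^esub>})"
    unfolding word_eval_langA[symmetric] using assms by (rule imageI)
  then obtain a where "word_eval sa = weighted [Inl a]" "a \<in> carrier A - {\<one>\<^bsub>A\<^esub>}" by (rule imageE)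
  with that[of a] show thesis by simp
qed

lemma langA_intro:
  assumes "a \<in> carrier A" "a \<noteq> \<one>\<^bsub>A\<^esub>"
  obtains sa where "sa \<in> langA" "word_eval sa = weighted [Inl a]"
proof -
  have "weighted [Inl a] \<in> word_eval ` langA"
    unfolding word_eval_langA using assms by (intro rev_image_eqI[of a]) simp_all
  then obtain sa where "weighted [Inl a] = word_eval sa" "sa \<in> langA" by (rule imageE)
  with that[of sa] show thesis by simp
qed

lemma langB_elim:
  assumes "sb \<in> langB"
  obtains b where "b \<in> carrier B" "b \<noteq> \<one>\<^bsub>B\<^esub>" "word_eval sb = weighted [Inr b]"
proof -
  have "word_eval sb \<in> (\<lambda>b. weighted [Inr b]) ` (carrier B - {\<one>\<^bsub>B\<^esub>})"
    unfolding word_eval_langB[symmetric] using assms by (rule imageI)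
  then obtain b where "word_eval sb = weighted [Inr b]" "b \<in> carrier B - {\<one>\<^bsub>B\<^esub>}" by (rule imageE)
  with that[of b] show thesis by simp
qed

lemma langB_intro:
  assumes "b \<in> carrier B" "b \<noteq> \<one>\<^bsub>B\<^esub>"
  obtains sb where "sb \<in> langB" "word_eval sb = weighted [Inr b]"
proof -
  have "weighted [Inr b] \<in> word_eval ` langB"
    unfolding word_eval_langB using assms by (intro rev_image_eqI[of b]) simp_all
  then obtain sb where "weighted [Inr b] = word_eval sb" "sb \<in> langB" by (rule imageE)
  with that[of sb] show thesis by simp
qed

lemma word_eval_star_pair_lang:
  assumes "x \<in> star pair_lang" and "z \<in> insert [] langA"
  shows "\<exists>w\<in>nfA_words. word_eval (x @ z) = weighted w"
  using assms(1)
proof (induction rule: star.induct)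
  case star_Nil
  show ?case
  proof (cases "z = []")
    case True
    then show ?thesis by (intro bexI[of _ "[]"]) (simp_all add: weighted_def)
  next
    case False
    then obtain a where "a \<in> carrier A" "a \<noteq> \<one>\<^bsub>A\<^esub>" "word_eval z = weighted [Inl a]"
      using assms(2) langA_elim by auto
    then show ?thesis by (intro bexI[of _ "[Inl a]"]) (simp_all add: fp_reduced_Cons)
  qed
next
  case (star_append u v)
  then obtain sa sb where u: "u = sa @ t_down # sb" "sa \<in> langA" "sb \<in> langB"
    by (auto simp: pair_lang_def conc_def)
  obtain a where a: "a \<in> carrier A" "a \<noteq> \<one>\<^bsub>A\<^esub>" "word_eval sa = weighted [Inl a]"
    using u(2) by (rule langA_elim)
  obtain b where b: "b \<in> carrier B" "b \<noteq> \<one>\<^bsub>B\<^esub>" "word_eval sb = weighted [Inr b]"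
    using u(3) by (rule langB_elim)
  obtain w where w: "w \<in> nfA_words" "word_eval (v @ z) = weighted w"
    using star_append.IH by blast
  have red: "red (Inr b # w)" using red_Inr_Cons[OF b(1,2) w(1)] .
  then have "word_eval (sb @ v @ z) = weighted (Inr b # w)" using word_eval_Inr[OF b(3) w(2)] by simp
  moreover have red': "red (Inl a # Inr b # w)" using red a by (simp add: fp_reduced_Cons)
  ultimately have "word_eval ((u @ v) @ z) = weighted (Inl a # Inr b # w)"
    using word_eval_Inl_t_down[OF a(3)] u(1) by simp
  moreover have "Inl a # Inr b # w \<in> nfA_words" using red' by simp
  ultimately show ?case by blast
qed

lemma nfA_lang_complete: "w \<in> nfA_words \<Longrightarrow> \<exists>y\<in>nfA_lang. word_eval y = weighted w"
proof (induction "length w" arbitrary: w rule: less_induct)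
  case less
  show ?case
  proof (cases w rule: remdups_adj.cases)
    case 1
    have "[] @ [] \<in> nfA_lang" unfolding nfA_lang_def by (intro concI star.star_Nil insertI1)
    then show ?thesis using 1 by (intro bexI[of _ "[]"]) (simp_all add: weighted_def)
  next
    case (2 x)
    then obtain a where a: "w = [Inl a]" "a \<in> carrier A" "a \<noteq> \<one>\<^bsub>A\<^esub>"
      using less.prems by (cases x) (auto simp: fp_reduced_Cons)
    obtain sa where sa: "sa \<in> langA" "word_eval sa = weighted [Inl a]"
      using a(2,3) by (rule langA_intro)
    have "[] @ sa \<in> nfA_lang" unfolding nfA_lang_def using sa(1) by (intro concI star.star_Nil insertI2)
    then show ?thesis using sa a(1) by (intro bexI[of _ sa]) simp_all
  next
    case (3 x y w')
    obtain a b where ab: "x = Inl a" "y = Inr b" "a \<in> carrier A" "a \<noteq> \<one>\<^bsub>A\<^esub>" "b \<in> carrier B" "b \<noteq> \<one>\<^bsub>B\<^esub>"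
      and w': "w' \<in> nfA_words"
      using less.prems 3 by (cases x; cases y) (auto simp: fp_reduced_Cons same_factor_iff)
    obtain sa where sa: "sa \<in> langA" "word_eval sa = weighted [Inl a]" using ab(3,4) by (rule langA_intro)
    obtain sb where sb: "sb \<in> langB" "word_eval sb = weighted [Inr b]" using ab(5,6) by (rule langB_intro)
    have "length w' < length w" using 3 by simp
    then obtain y' where y': "y' \<in> nfA_lang" "word_eval y' = weighted w'" using less.hyps w' by blast
    obtain x' z' where xz: "y' = x' @ z'" "x' \<in> star pair_lang" "z' \<in> insert [] langA"
      using y'(1) unfolding nfA_lang_def by (rule concE)
    have "sa @ [t_down] @ sb \<in> pair_lang"
      unfolding pair_lang_def using sa(1) sb(1) by (intro concI singletonI)
    then have "(sa @ t_down # sb) @ x' \<in> star pair_lang" using xz(2) by (intro star.star_append) simp_all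
    then have "((sa @ t_down # sb) @ x') @ z' \<in> nfA_lang"
      unfolding nfA_lang_def using xz(3) by (rule concI)
    moreover have "word_eval (sa @ t_down # sb @ y') = weighted w"
      using word_eval_Inl_t_down[OF sa(2) word_eval_Inr[OF sb(2) y'(2)]] less.prems 3 ab
      by (simp add: fp_reduced_Cons)
    ultimately show ?thesis using xz(1) by (intro bexI[of _ "((sa @ t_down # sb) @ x') @ z'"]) simp_all
  qed
qed

lemma nfA_lang_elim:
  assumes "y \<in> nfA_lang"
  obtains w where "w \<in> nfA_words" "word_eval y = weighted w"
proof -
  obtain x z where "y = x @ z" "x \<in> star pair_lang" "z \<in> insert [] langA"
    using assms unfolding nfA_lang_def by (rule concE)
  then obtain w where "w \<in> nfA_words" "word_eval y = weighted w"
    using word_eval_star_pair_lang by meson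
  then show thesis by (rule that)
qed

lemma langB_nfA_lang_elim:
  assumes "sb \<in> langB" "y \<in> nfA_lang"
  obtains w where "red w" "w \<noteq> []" "\<not> isl (hd w)" "word_eval (sb @ y) = weighted w"
proof -
  obtain b where b: "b \<in> carrier B" "b \<noteq> \<one>\<^bsub>B\<^esub>" "word_eval sb = weighted [Inr b]"
    using assms(1) by (rule langB_elim)
  obtain w where w: "w \<in> nfA_words" "word_eval y = weighted w"
    using assms(2) by (rule nfA_lang_elim)
  then have "red (Inr b # w)" using red_Inr_Cons[OF b(1,2)] by blast
  then show thesis using that[of "Inr b # w"] word_eval_Inr[OF b(3) w(2)] by simp
qed

lemma nf_lang_elim:
  assumes "x \<in> nf_lang"
  obtains w where "red w" "w \<noteq> []" "word_eval x = weighted w"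
proof -
  from assms consider sb y where "x = sb @ y" "sb \<in> langB" "y \<in> nfA_lang"
    | sa where "x = sa" "sa \<in> langA"
    | sa sb y where "x = sa @ t_down # sb @ y" "sa \<in> langA" "sb \<in> langB" "y \<in> nfA_lang"
    unfolding nf_lang_def by (auto elim!: concE)
  then show thesis
  proof cases
    case 1
    then show thesis using that langB_nfA_lang_elim by metis
  next
    case 2
    obtain a where "a \<in> carrier A" "a \<noteq> \<one>\<^bsub>A\<^esub>" "word_eval sa = weighted [Inl a]"
      using 2(2) by (rule langA_elim)
    then show thesis using that[of "[Inl a]"] 2(1) by (simp add: fp_reduced_Cons)
  next
    case 3
    obtain a where a: "a \<in> carrier A" "a \<noteq> \<one>\<^bsub>A\<^esub>" "word_eval sa = weighted [Inl a]"
      using 3(2) by (rule langA_elim)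
    obtain w where w: "red w" "w \<noteq> []" "\<not> isl (hd w)" "word_eval (sb @ y) = weighted w"
      using 3(3,4) by (rule langB_nfA_lang_elim)
    then have "red (Inl a # w)" using a by (simp add: fp_reduced_Cons same_factor_iff)
    then show thesis using that[of "Inl a # w"] word_eval_Inl_t_down[OF a(3) w(4)] w 3(1) by simp
  qed
qed

lemma nf_lang_intro:
  assumes "red w" and "w \<noteq> []"
  obtains u where "u \<in> nf_lang" "word_eval u = weighted w"
proof -
  from assms obtain x v where w: "w = x # v" and red: "red (x # v)" by (cases w) auto
  show thesis
  proof (cases x)
    case (Inr b)
    then have b: "b \<in> carrier B" "b \<noteq> \<one>\<^bsub>B\<^esub>" and v: "v \<in> nfA_words"
      using red by (auto simp: fp_reduced_Cons same_factor_iff)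
    obtain sb where sb: "sb \<in> langB" "word_eval sb = weighted [Inr b]" using b by (rule langB_intro)
    obtain y where y: "y \<in> nfA_lang" "word_eval y = weighted v" using nfA_lang_complete[OF v] by blast
    have "sb @ y \<in> nf_lang" unfolding nf_lang_def using sb(1) y(1) by (intro UnI1 concI)
    then show thesis using that word_eval_Inr[OF sb(2) y(2)] red Inr w by simp
  next
    case (Inl a)
    then have a: "a \<in> carrier A" "a \<noteq> \<one>\<^bsub>A\<^esub>" using red by (simp_all add: fp_reduced_Cons)
    obtain sa where sa: "sa \<in> langA" "word_eval sa = weighted [Inl a]" using a by (rule langA_intro)
    show thesis
    proof (cases v)
      case Nil
      have "sa @ [] \<in> nf_lang" unfolding nf_lang_def using sa(1) by (intro UnI2 concI insertI1)
      then show thesis using that sa(2) Inl Nil w by simp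
    next
      case (Cons y v')
      then obtain b where y: "y = Inr b" and b: "b \<in> carrier B" "b \<noteq> \<one>\<^bsub>B\<^esub>" and v': "v' \<in> nfA_words"
        using red Inl by (cases y) (auto simp: fp_reduced_Cons same_factor_iff)
      obtain sb where sb: "sb \<in> langB" "word_eval sb = weighted [Inr b]" using b by (rule langB_intro)
      obtain y' where y': "y' \<in> nfA_lang" "word_eval y' = weighted v'" using nfA_lang_complete[OF v'] by blast
      have "sa @ ([t_down] @ sb @ y') \<in> nf_lang"
        unfolding nf_lang_def using sa(1) sb(1) y'(1) by (intro UnI2 concI insertI2 singletonI)
      moreover have "word_eval (sa @ t_down # sb @ y') = weighted w"
        using word_eval_Inl_t_down[OF sa(2) word_eval_Inr[OF sb(2) y'(2)]] red Inl Cons y w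
        by (simp add: fp_reduced_Cons)
      ultimately show thesis using that by simp
    qed
  qed
qed

lemma word_eval_append_replicate:
  assumes "word_eval x = (w, n)" and "red w"
  shows "word_eval (x @ replicate k t_up) = (w, n + int k)"
    and "word_eval (x @ replicate k t_down) = (w, n - int k)"
  using assms foldr_fp_cons_reduced[of A B w "[]"]
  by (simp_all add: word_eval_append word_eval_replicate_t_up word_eval_replicate_t_down mult_free_product)

lemma word_eval_cone_lang: "word_eval ` cone_lang = fp_cone"
proof (intro equalityI subsetI)
  fix g assume "g \<in> word_eval ` cone_lang"
  then obtain x where g: "g = word_eval x" and x_cone: "x \<in> cone_lang" by (rule imageE)
  obtain u v where x: "x = u @ v" and u: "u \<in> nf_lang \<union> {[t_up]}" and "v \<in> star {[t_up]}"
    using x_cone unfolding cone_lang_def by (rule concE)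
  then obtain k where v: "v = replicate k t_up" by (auto simp: star_singleton)
  show "g \<in> fp_cone"
  proof (cases "u = [t_up]")
    case True
    then have "g = word_eval (replicate (Suc k) t_up)" using g x v by simp
    then show ?thesis using word_eval_replicate_t_up[of "Suc k"] by (simp add: fp_cone_def threshold_def)
  next
    case False
    then obtain w where "red w" "w \<noteq> []" "word_eval u = weighted w"
      using u nf_lang_elim by blast
    then show ?thesis using g x v word_eval_append_replicate(1) by (simp add: weighted_def fp_cone_def threshold_def)
  qed
next
  fix g assume "g \<in> fp_cone"
  then obtain w n where g: "g = (w, n)" "red w" "threshold w \<le> n" by (auto simp: fp_cone_def)
  obtain x k where x: "x \<in> nf_lang \<union> {[t_up]}" "word_eval (x @ replicate k t_up) = g"
  proof (cases "w = []")
    case True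
    then have "word_eval ([t_up] @ replicate (nat (n - 1)) t_up) = g"
      using g word_eval_append_replicate(1)[OF word_eval_t_up] by (simp add: threshold_def)
    then show thesis using that by blast
  next
    case False
    obtain x where "x \<in> nf_lang" "word_eval x = weighted w" using g(2) False by (rule nf_lang_intro)
    moreover have "word_eval (x @ replicate (nat (n - weight w)) t_up) = g"
      using calculation g False word_eval_append_replicate(1) by (simp add: weighted_def threshold_def)
    ultimately show thesis using that by blast
  qed
  moreover have "x @ replicate k t_up \<in> cone_lang"
    unfolding cone_lang_def star_singleton using x(1) by (intro concI rangeI)
  then show "g \<in> word_eval ` cone_lang" using x(2) by (rule rev_image_eqI[OF _ sym])
qed

lemma word_eval_onto: "word_eval ` lists Alph = carrier FZ"
proof (intro equalityI subsetI)
  fix g assume "g \<in> word_eval ` lists Alph"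
  then obtain x where "g = word_eval x" by (rule imageE)
  then show "g \<in> carrier FZ" using word_eval_carrier by simp
next
  fix g assume "g \<in> carrier FZ"
  then obtain w n where g: "g = (w, n)" "red w" by (auto simp: carrier_free_product)
  obtain x where x: "x \<in> lists Alph" "word_eval x = weighted w"
  proof (cases "w = []")
    case True
    then show thesis using that[of "[]"] by (simp add: weighted_def)
  next
    case False
    obtain y where y: "y \<in> nf_lang" "word_eval y = weighted w" using g(2) False by (rule nf_lang_intro)
    have "y \<in> lists Alph" using y(1) regular_language_lists[OF regular_nf_lang] by (rule rev_subsetD)
    then show thesis using y(2) by (rule that)
  qed
  obtain y where "y \<in> lists Alph" "word_eval y = g"
  proof (cases "weight w \<le> n")
    case True
    then have "word_eval (x @ replicate (nat (n - weight w)) t_up) = g"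
      using x g word_eval_append_replicate(1) by (simp add: weighted_def)
    then show thesis by (rule that[rotated]) (use x(1) t_up_Alph in \<open>auto simp: in_lists_conv_set\<close>)
  next
    case False
    then have "word_eval (x @ replicate (nat (weight w - n)) t_down) = g"
      using x g word_eval_append_replicate(2) by (simp add: weighted_def)
    then show thesis by (rule that[rotated]) (use x(1) t_down_Alph in \<open>auto simp: in_lists_conv_set\<close>)
  qed
  then show "g \<in> word_eval ` lists Alph" by (intro rev_image_eqI[OF _ sym])
qed

lemma regular_left_order_FZ: "regular_left_order FZ (cone_order FZ fp_cone)"
  unfolding regular_left_order_def
proof (intro conjI exI)
  show "finitely_generated_group FZ"
    by (rule finitely_generated_group_word_monoid_hom[OF group_FZ finite_Alph word_monoid_hom_word_eval word_eval_onto])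
  show "word_eval ` cone_lang = positive_cone FZ (cone_order FZ fp_cone)"
    by (simp add: word_eval_cone_lang positive_cone_fp_cone)
qed (rule left_order_fp_cone finite_Alph word_monoid_hom_word_eval word_eval_onto regular_cone_lang)+

end

theorem corollary5p15:
  fixes A :: "('a, 'm) monoid_scheme" and B :: "('b, 'n) monoid_scheme"
  assumes "group A" and "group B"
    and "admits_regular_left_order A" and "admits_regular_left_order B"
  shows "admits_regular_left_order (free_product A B \<times>\<times> integer_group)"
proof -
  obtain ltA AlphA \<pi>A LA where A: "left_order A ltA" "finite AlphA" "word_monoid_hom AlphA A \<pi>A"
    "regular_language AlphA LA" "\<pi>A ` LA = positive_cone A ltA"
    using assms(3) by (auto simp: admits_regular_left_order_def regular_left_order_def)
  obtain ltB AlphB \<pi>B LB where B: "left_order B ltB" "finite AlphB" "word_monoid_hom AlphB B \<pi>B"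
    "regular_language AlphB LB" "\<pi>B ` LB = positive_cone B ltB"
    using assms(4) by (auto simp: admits_regular_left_order_def regular_left_order_def)
  interpret fp_regular A B ltA ltB AlphA \<pi>A LA AlphB \<pi>B LB
    using assms(1,2) A B
    by (intro fp_regular.intro fp_ordered.intro fp_groups.intro fp_ordered_axioms.intro fp_regular_axioms.intro)
  show ?thesis
    using regular_left_order_FZ by (auto simp: admits_regular_left_order_def)
qed

end
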